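(* For all $\eta,d>0$ and all rationals $r$ with $0<r\le 1/2$ there is $\varepsilon=\varepsilon(\eta,d,r)>0$ such that for every $\tilde N_{max}\in\mathbb N$ there is $\beta=\beta(\eta,r,\varepsilon,\tilde N_{max})>0$ such that for all $n\in\mathbb N$ the following holds. Let $(F,R)$ be an anchored $\beta n$-forest with colour classes $F_1,F_2$ such that $R\subseteq F_2$ and every component $K$ of $F-R$ satisfies $|F_1\cap K|\le|F_2\cap K|$. Let $H$ be an $r$-skew LKS-graph on $n$ vertices with parameters $(k,\eta',\varepsilon,d)$ (with $k,\eta'$ arbitrary) whose cluster graph $\mathbf H$ has at most $\tilde N_{max}$ vertices. Let $U\subseteq V(H)$ and let $\mathbf M$ be a matching in $\mathbf H$ each of whose edges joins an $L$-cluster and an $S$-cluster. Suppose that a cluster $A\in V(\mathbf H)$ satisfies $$\overline{\deg}(A,\mathcal S\cap V(\mathbf M))\ge\frac{1-r}{r}|F_2|+\sum_{CD\in\mathbf M,\ C\in\mathcal S}\max\Big\{|U\cap C|,\frac{1-r}{r}|U\cap D|\Big\}+\eta n,$$ where $\mathcal S$ is the set of $S$-clusters and the sum runs over the edges $CD$ of $\mathbf M$ with $C$ the $S$-cluster and $D$ the $L$-cluster. Then every injective map of $R$ into the ultratypical vertices of $A$ extends to an embedding $\varphi$ of $F$ into $H$ avoiding $U$ (no vertex of $V(F)\setminus R$ is mapped into $U$) such that $\varphi(V(F_1))$ lies in the union of the $S$-clusters of $V(\mathbf M)$, $\varphi(V(F_2)\setminus R)$ lies in the union of the $L$-clusters of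 $V(\mathbf M)$, and the vertices of $V(F_2)$ are mapped to ultratypical vertices. Moreover, for every cluster $C\in V(\mathbf H)$ containing the image of some vertex of $F-R$, we have $|C\setminus(U\cup\varphi(V(F)))|\ge r\eta|C|/8$.
   Context: A pair $(F,R)$ is an anchored $\tau$-forest if $F$ is a forest, $R$ is contained in one colour class of $F$, every component of $F-R$ has at least $2$ and at most $\tau$ vertices, every component of $F-R$ is adjacent in $F$ to at least one and at most two vertices of $R$, and any two vertices of $R$ are at distance at least $4$ in $F$. An embedding is an injective map of vertices sending edges to edges. For disjoint $X,Y$, $d(X,Y)=|E(X,Y)|/(|X||Y|)$; $(X,Y)$ is $\varepsilon$-regular if $|d(X',Y')-d(X,Y)|\le\varepsilon$ whenever $X'\subseteq X$, $Y'\subseteq Y$, $|X'|\ge\varepsilon|X|$, $|Y'|\ge\varepsilon|Y|$. For $r\le1/2$, $H$ is an $r$-skew LKS-graph with parameters $(k,\eta',\varepsilon,d)$ if $V(H)$ has a partition $\{L_1,\dots,L_{m_L},S_1,\dots,S_{m_S}\}$ with: $m_L\ge(1+\eta')m_S$; all $L_i$ of equal size and all $S_j$ of equal size; $r|S_j|=(1-r)|L_i|$; each $(L_i,L_j)$ ($i\neq j$) and $(L_i,S_j)$ $\varepsilon$-regular of density $0$ or at least $d$; no edges inside the sets nor between distinct $S_i,S_j$; each $L_i$ has average degree at least $(1+\eta')k$. The $L_i$ ($S_j$) are $L$-clusters ($S$-clusters); the cluster graph $\mathbf H$ has the clusters as vertices, two adjacent iff the pair has positive density. For a cluster $A$ and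 a set $\mathcal T$ of clusters, $\overline{\deg}(A,\mathcal T)$ is the average over $a\in A$ of the number of neighbours of $a$ in the union of $\mathcal T$. A vertex $x$ of a cluster $X$ is typical to a cluster $Y$ if it has at least $(d(X,Y)-\varepsilon)|Y|$ neighbours in $Y$, and ultratypical if it is typical to all but at most $\sqrt{\varepsilon}|V(\mathbf H)|$ clusters $Y\neq X$. *)

theory Defs
  imports Complex_Main
begin

definition graph :: "'a set \<Rightarrow> ('a \<Rightarrow> 'a \<Rightarrow> bool) \<Rightarrow> bool" where
  "graph V E \<longleftrightarrow> finite V \<and> (\<forall>x y. E x y \<longrightarrow> x \<in> V \<and> y \<in> V)
     \<and> (\<forall>x y. E x y \<longrightarrow> E y x) \<and> (\<forall>x. \<not> E x x)"

definition is_cycle :: "('a \<Rightarrow> 'a \<Rightarrow> bool) \<Rightarrow> 'a list \<Rightarrow> bool" where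
  "is_cycle E xs \<longleftrightarrow> length xs \<ge> 3 \<and> distinct xs
     \<and> (\<forall>i. Suc i < length xs \<longrightarrow> E (xs ! i) (xs ! Suc i)) \<and> E (last xs) (hd xs)"

definition forest :: "'a set \<Rightarrow> ('a \<Rightarrow> 'a \<Rightarrow> bool) \<Rightarrow> bool" where
  "forest V E \<longleftrightarrow> graph V E \<and> \<not> (\<exists>xs. is_cycle E xs)"

definition colour_classes :: "'a set \<Rightarrow> ('a \<Rightarrow> 'a \<Rightarrow> bool) \<Rightarrow> 'a set \<Rightarrow> 'a set \<Rightarrow> bool" where
  "colour_classes V E X Y \<longleftrightarrow> X \<union> Y = V \<and> X \<inter> Y = {}
     \<and> (\<forall>x y. E x y \<longrightarrow> (x \<in> X \<and> y \<in> Y) \<or> (x \<in> Y \<and> y \<in> X))"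

definition walk :: "('a \<Rightarrow> 'a \<Rightarrow> bool) \<Rightarrow> 'a list \<Rightarrow> bool" where
  "walk E xs \<longleftrightarrow> xs \<noteq> [] \<and> (\<forall>i. Suc i < length xs \<longrightarrow> E (xs ! i) (xs ! Suc i))"

definition dist_at_least :: "('a \<Rightarrow> 'a \<Rightarrow> bool) \<Rightarrow> nat \<Rightarrow> 'a \<Rightarrow> 'a \<Rightarrow> bool" where
  "dist_at_least E m x y \<longleftrightarrow>
     (\<forall>xs. walk E xs \<and> hd xs = x \<and> last xs = y \<longrightarrow> length xs - 1 \<ge> m)"

definition components :: "('a \<Rightarrow> 'a \<Rightarrow> bool) \<Rightarrow> 'a set \<Rightarrow> 'a set set" where
  "components E W = {K. \<exists>x\<in>W. K = {y \<in> W. (\<lambda>u v. u \<in> W \<and> v \<in> W \<and> E u v)\<^sup>*\<^sup>* x y}}"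

definition anchored_forest ::
  "'a set \<Rightarrow> ('a \<Rightarrow> 'a \<Rightarrow> bool) \<Rightarrow> 'a set \<Rightarrow> real \<Rightarrow> bool" where
  "anchored_forest V E R \<tau> \<longleftrightarrow> forest V E \<and> R \<subseteq> V
     \<and> (\<exists>X Y. colour_classes V E X Y \<and> R \<subseteq> X)
     \<and> (\<forall>K \<in> components E (V - R).
           2 \<le> card K \<and> real (card K) \<le> \<tau>
           \<and> 1 \<le> card {x \<in> R. \<exists>y\<in>K. E x y} \<and> card {x \<in> R. \<exists>y\<in>K. E x y} \<le> 2)
     \<and> (\<forall>x\<in>R. \<forall>y\<in>R. x \<noteq> y \<longrightarrow> dist_at_least E 4 x y)"

definition edges_between :: "('a \<Rightarrow> 'a \<Rightarrow> bool) \<Rightarrow> 'a set \<Rightarrow> 'a set \<Rightarrow> ('a \<times> 'a) set" where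
  "edges_between E X Y = {(x, y). x \<in> X \<and> y \<in> Y \<and> E x y}"

definition density :: "('a \<Rightarrow> 'a \<Rightarrow> bool) \<Rightarrow> 'a set \<Rightarrow> 'a set \<Rightarrow> real" where
  "density E X Y = real (card (edges_between E X Y)) / (real (card X) * real (card Y))"

definition regular_pair :: "('a \<Rightarrow> 'a \<Rightarrow> bool) \<Rightarrow> real \<Rightarrow> 'a set \<Rightarrow> 'a set \<Rightarrow> bool" where
  "regular_pair E \<epsilon> X Y \<longleftrightarrow>
     (\<forall>X' Y'. X' \<subseteq> X \<longrightarrow> Y' \<subseteq> Y \<longrightarrow> real (card X') \<ge> \<epsilon> * real (card X)
        \<longrightarrow> real (card Y') \<ge> \<epsilon> * real (card Y)
        \<longrightarrow> \<bar>density E X' Y' - density E X Y\<bar> \<le> \<epsilon>)"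

definition skew_LKS ::
  "real \<Rightarrow> 'a set \<Rightarrow> ('a \<Rightarrow> 'a \<Rightarrow> bool) \<Rightarrow> 'a set set \<Rightarrow> 'a set set
     \<Rightarrow> nat \<Rightarrow> real \<Rightarrow> real \<Rightarrow> real \<Rightarrow> bool" where
  "skew_LKS r V E LC SC k \<eta>' \<epsilon> d \<longleftrightarrow> graph V E
     \<and> LC \<inter> SC = {} \<and> \<Union>(LC \<union> SC) = V \<and> (\<forall>C \<in> LC \<union> SC. C \<noteq> {})
     \<and> (\<forall>C \<in> LC \<union> SC. \<forall>C' \<in> LC \<union> SC. C \<noteq> C' \<longrightarrow> C \<inter> C' = {})
     \<and> real (card LC) \<ge> (1 + \<eta>') * real (card SC)
     \<and> (\<forall>L \<in> LC. \<forall>L' \<in> LC. card L = card L')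
     \<and> (\<forall>S \<in> SC. \<forall>S' \<in> SC. card S = card S')
     \<and> (\<forall>L \<in> LC. \<forall>S \<in> SC. r * real (card S) = (1 - r) * real (card L))
     \<and> (\<forall>L \<in> LC. \<forall>L' \<in> LC. L \<noteq> L' \<longrightarrow>
           regular_pair E \<epsilon> L L' \<and> (density E L L' = 0 \<or> density E L L' \<ge> d))
     \<and> (\<forall>L \<in> LC. \<forall>S \<in> SC.
           regular_pair E \<epsilon> L S \<and> (density E L S = 0 \<or> density E L S \<ge> d))
     \<and> (\<forall>C \<in> LC \<union> SC. \<forall>x\<in>C. \<forall>y\<in>C. \<not> E x y)
     \<and> (\<forall>S \<in> SC. \<forall>S' \<in> SC. S \<noteq> S' \<longrightarrow> (\<forall>x\<in>S. \<forall>y\<in>S'. \<not> E x y))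
     \<and> (\<forall>L \<in> LC. (\<Sum>v\<in>L. real (card {u. E v u})) / real (card L) \<ge> (1 + \<eta>') * real k)"

definition LS_matching ::
  "('a \<Rightarrow> 'a \<Rightarrow> bool) \<Rightarrow> 'a set set \<Rightarrow> 'a set set \<Rightarrow> ('a set \<times> 'a set) set \<Rightarrow> bool" where
  "LS_matching E LC SC M \<longleftrightarrow>
     (\<forall>(C, D) \<in> M. C \<in> SC \<and> D \<in> LC \<and> density E C D > 0)
     \<and> (\<forall>p\<in>M. \<forall>q\<in>M. p \<noteq> q \<longrightarrow> fst p \<noteq> fst q \<and> snd p \<noteq> snd q)"

definition avg_deg :: "('a \<Rightarrow> 'a \<Rightarrow> bool) \<Rightarrow> 'a set \<Rightarrow> 'a set set \<Rightarrow> real" where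
  "avg_deg E A T = (\<Sum>a\<in>A. real (card {y \<in> \<Union>T. E a y})) / real (card A)"

definition typical :: "('a \<Rightarrow> 'a \<Rightarrow> bool) \<Rightarrow> real \<Rightarrow> 'a set \<Rightarrow> 'a set \<Rightarrow> 'a \<Rightarrow> bool" where
  "typical E \<epsilon> X Y x \<longleftrightarrow> real (card {y \<in> Y. E x y}) \<ge> (density E X Y - \<epsilon>) * real (card Y)"

definition ultratypical :: "('a \<Rightarrow> 'a \<Rightarrow> bool) \<Rightarrow> real \<Rightarrow> 'a set set \<Rightarrow> 'a \<Rightarrow> bool" where
  "ultratypical E \<epsilon> Cl x \<longleftrightarrow> (\<exists>X \<in> Cl. x \<in> X \<and>
     real (card {Y \<in> Cl. Y \<noteq> X \<and> \<not> typical E \<epsilon> X Y x}) \<le> sqrt \<epsilon> * real (card Cl))"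

definition embedding ::
  "'b set \<Rightarrow> ('b \<Rightarrow> 'b \<Rightarrow> bool) \<Rightarrow> 'a set \<Rightarrow> ('a \<Rightarrow> 'a \<Rightarrow> bool) \<Rightarrow> ('b \<Rightarrow> 'a) \<Rightarrow> bool" where
  "embedding VF EF V E \<phi> \<longleftrightarrow> inj_on \<phi> VF \<and> \<phi> ` VF \<subseteq> V
     \<and> (\<forall>u v. EF u v \<longrightarrow> E (\<phi> u) (\<phi> v))"

end

(*
  The components of F - R are embedded one at a time, greedily. A component K hangs
  from at most two anchors. Averaging the degree condition over the edges CD of the
  matching yields an edge whose S-cluster C is typical for the images of the anchors and
  such that C and its partner D are still largely free of U and of the vertices used so
  far: the term (1-r)/r |F2| pays for the used vertices of the L-clusters, and the balance
  |F1 \<inter> K| \<le> |F2 \<inter> K| ensures that no S-cluster is ever used more than its partner.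
  Inside C \<union> D, \<epsilon>-regularity lets K be embedded vertex by vertex, since every
  admissible image of a vertex leaves more than |K| admissible images for each of its
  neighbours. Components are tiny compared with clusters, so every step uses up only a
  negligible part of the room in C and D.
*)

theory Submission
  imports Defs
begin

section \<open>Density and regularity\<close>

lemma density_commute:
  assumes "symp E"
  shows "density E X Y = density E Y X"
proof -
  have "edges_between E Y X = prod.swap ` edges_between E X Y"
    using assms unfolding edges_between_def by (auto simp: image_iff dest: sympD)
  then have "card (edges_between E Y X) = card (edges_between E X Y)"
    by (simp add: card_image)
  then show ?thesis unfolding density_def by (simp add: mult.commute)
qed

lemma regular_pair_commute:
  assumes "symp E" "regular_pair E \<epsilon> X Y"
  shows "regular_pair E \<epsilon> Y X"
  using assms unfolding regular_pair_def by (metis density_commute)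

lemma density_nonneg: "density E X Y \<ge> 0"
  unfolding density_def by simp

lemma card_edges_between:
  assumes "finite X" "finite Y"
  shows "card (edges_between E X Y) = (\<Sum>x\<in>X. card {y\<in>Y. E x y})"
proof -
  have "edges_between E X Y = Sigma X (\<lambda>x. {y\<in>Y. E x y})"
    unfolding edges_between_def by auto
  then show ?thesis using assms by (simp add: card_SigmaI)
qed

lemma density_le_1:
  assumes "finite X" "finite Y"
  shows "density E X Y \<le> 1"
proof -
  have "edges_between E X Y \<subseteq> X \<times> Y" unfolding edges_between_def by auto
  then have "card (edges_between E X Y) \<le> card X * card Y"
    using assms by (metis card_cartesian_product card_mono finite_cartesian_product)
  then have "real (card (edges_between E X Y)) \<le> real (card X) * real (card Y)"
    by (metis of_nat_le_iff of_nat_mult)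
  then show ?thesis unfolding density_def
    by (cases "real (card X) * real (card Y) = 0") (auto simp: divide_le_eq)
qed

lemma sum_card_swap:
  assumes "finite X" "finite Y"
  shows "(\<Sum>x\<in>X. card {y\<in>Y. P x y}) = (\<Sum>y\<in>Y. card {x\<in>X. P x y})"
proof -
  have card_eq: "card {y\<in>Z. Q y} = (\<Sum>y\<in>Z. if Q y then 1 else 0)" if "finite Z"
    for Z and Q :: "_ \<Rightarrow> bool"
    using that by (simp add: sum.If_cases Int_def)
  have "(\<Sum>x\<in>X. card {y\<in>Y. P x y}) = (\<Sum>x\<in>X. \<Sum>y\<in>Y. if P x y then 1 else 0)"
    using card_eq[OF assms(2)] by simp
  also have "\<dots> = (\<Sum>y\<in>Y. \<Sum>x\<in>X. if P x y then 1 else 0)" by (rule sum.swap)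
  also have "\<dots> = (\<Sum>y\<in>Y. card {x\<in>X. P x y})" using card_eq[OF assms(1)] by simp
  finally show ?thesis .
qed

lemma real_card_Diff:
  assumes "finite X"
  shows "real (card (X - Y)) = real (card X) - real (card (X \<inter> Y))"
  using card_Int_Diff[OF assms, of Y] by simp

lemma card_Diff_lower_bound:
  assumes "finite X" "finite Y" "real (card Y) \<le> b"
  shows "real (card X) - b \<le> real (card (X - Y))"
proof -
  have "card (X \<inter> Y) \<le> card Y" using assms(2) by (simp add: card_mono)
  then show ?thesis using real_card_Diff[OF assms(1), of Y] assms(3) by linarith
qed

lemma card_Diff_Un_lower_bound:
  assumes "finite X" "Y \<subseteq> X"
  shows "real (card Y) - card (U \<inter> X) - card (I \<inter> X) \<le> card (Y - (U \<union> I))"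
proof -
  have "Y \<inter> (U \<union> I) \<subseteq> (U \<inter> X) \<union> (I \<inter> X)" using assms(2) by auto
  then have "card (Y \<inter> (U \<union> I)) \<le> card ((U \<inter> X) \<union> (I \<inter> X))"
    by (rule card_mono[rotated]) (use assms(1) in auto)
  also have "\<dots> \<le> card (U \<inter> X) + card (I \<inter> X)" by (rule card_Un_le)
  finally show ?thesis
    using real_card_Diff[OF finite_subset[OF assms(2,1)], of "U \<union> I"] by linarith
qed

lemma regular_pair_few_low_degree:
  assumes reg: "regular_pair E \<epsilon> X Y" and "finite X" "finite Y" "X \<noteq> {}"
    and sub: "Y' \<subseteq> Y" and big: "\<epsilon> * card Y \<le> card Y'" and "card Y' > 0"
    and dens: "d0 \<le> density E X Y" and "\<epsilon> > 0"
  shows "real (card {x\<in>X. real (card {y\<in>Y'. E x y}) < (d0 - \<epsilon>) * card Y'}) < \<epsilon> * card X"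
proof (rule ccontr)
  define B where "B = {x\<in>X. real (card {y\<in>Y'. E x y}) < (d0 - \<epsilon>) * card Y'}"
  assume "\<not> ?thesis"
  then have B_big: "\<epsilon> * card X \<le> card B" unfolding B_def by simp
  have "card X > 0" using assms by auto
  then have "card B > 0" using B_big \<open>\<epsilon> > 0\<close>
    by (metis mult_pos_pos not_less of_nat_0_less_iff order_le_less_trans)
  then have "B \<noteq> {}" "finite B" by (auto intro: card_ge_0_finite)
  have "B \<subseteq> X" unfolding B_def by auto
  then have "\<bar>density E B Y' - density E X Y\<bar> \<le> \<epsilon>"
    using reg sub B_big big unfolding regular_pair_def by auto
  moreover have "density E B Y' < d0 - \<epsilon>"
  proof -
    have "finite Y'" using sub \<open>finite Y\<close> finite_subset by auto
    have "(\<Sum>x\<in>B. real (card {y\<in>Y'. E x y})) < (\<Sum>x\<in>B. (d0 - \<epsilon>) * card Y')"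
      by (rule sum_strict_mono) (use \<open>finite B\<close> \<open>B \<noteq> {}\<close> B_def in auto)
    then have "real (card (edges_between E B Y')) < card B * ((d0 - \<epsilon>) * card Y')"
      using card_edges_between[OF \<open>finite B\<close> \<open>finite Y'\<close>, of E] by simp
    then show ?thesis unfolding density_def
      using \<open>card B > 0\<close> \<open>card Y' > 0\<close> by (simp add: divide_less_eq mult_ac)
  qed
  ultimately show False using dens by linarith
qed

section \<open>Components and greedy tree embeddings\<close>

abbreviation induced :: "('b \<Rightarrow> 'b \<Rightarrow> bool) \<Rightarrow> 'b set \<Rightarrow> 'b \<Rightarrow> 'b \<Rightarrow> bool" where
  "induced E S \<equiv> \<lambda>u v. u \<in> S \<and> v \<in> S \<and> E u v"

lemma symp_induced: "symp E \<Longrightarrow> symp (induced E S)"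
  by (auto intro: sympI dest: sympD)

lemma rtranclp_distinct_path:
  assumes "Q\<^sup>*\<^sup>* x y"
  shows "\<exists>xs. distinct xs \<and> xs \<noteq> [] \<and> hd xs = x \<and> last xs = y
           \<and> (\<forall>i. Suc i < length xs \<longrightarrow> Q (xs!i) (xs!Suc i))"
  using assms
proof (induction rule: rtranclp_induct)
  case base
  show ?case by (rule exI[of _ "[x]"]) auto
next
  case (step y z)
  then obtain xs where xs: "distinct xs" "xs \<noteq> []" "hd xs = x" "last xs = y"
    "\<forall>i. Suc i < length xs \<longrightarrow> Q (xs!i) (xs!Suc i)" by blast
  show ?case
  proof (cases "z \<in> set xs")
    case True
    then obtain i where i: "i < length xs" "xs!i = z" by (auto simp: in_set_conv_nth)
    let ?ys = "take (Suc i) xs"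
    have "distinct ?ys" "?ys \<noteq> []" "hd ?ys = x" using xs by (simp_all add: hd_take)
    moreover have "last ?ys = z" using i by (simp add: take_Suc_conv_app_nth)
    moreover have "\<forall>j. Suc j < length ?ys \<longrightarrow> Q (?ys!j) (?ys!Suc j)" using xs(5) i by auto
    ultimately show ?thesis by blast
  next
    case False
    have "Q ((xs @ [z])!j) ((xs @ [z])!Suc j)" if "Suc j < length (xs @ [z])" for j
    proof (cases "Suc j < length xs")
      case True then show ?thesis using xs(5) by (simp add: nth_append)
    next
      case False
      then have "j = length xs - 1" "Suc j = length xs" using that by auto
      then show ?thesis using xs(2,4) step(2) by (auto simp: nth_append last_conv_nth)
    qed
    then show ?thesis using xs False by (intro exI[of _ "xs @ [z]"]) auto
  qed
qed

text \<open>Two neighbours of \<open>w\<close> in \<open>S\<close> would close a cycle through \<open>w\<close>.\<close>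
lemma acyclic_unique_neighbour:
  assumes acyc: "\<not> (\<exists>xs. is_cycle E xs)" and "symp E"
    and conn: "\<forall>v\<in>S. (induced E S)\<^sup>*\<^sup>* a v" and "p1 \<in> S" "p2 \<in> S"
    and w: "w \<notin> S" "E w p1" "E w p2"
  shows "p1 = p2"
proof (rule ccontr)
  assume ne: "p1 \<noteq> p2"
  have "(induced E S)\<^sup>*\<^sup>* p1 a"
    using symp_rtranclp[OF symp_induced[OF \<open>symp E\<close>]] conn \<open>p1 \<in> S\<close> by (blast dest: sympD)
  then have path: "(induced E S)\<^sup>*\<^sup>* p1 p2" using conn \<open>p2 \<in> S\<close> by (meson rtranclp_trans)
  obtain xs where xs: "distinct xs" "xs \<noteq> []" "hd xs = p1" "last xs = p2"
    "\<forall>i. Suc i < length xs \<longrightarrow> xs!i \<in> S \<and> xs!Suc i \<in> S \<and> E (xs!i) (xs!Suc i)"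
    using rtranclp_distinct_path[OF path] by blast
  have len: "length xs \<ge> 2"
    using xs(2-4) ne by (cases xs) (auto simp: Suc_le_eq)
  have in_S: "set xs \<subseteq> S"
  proof
    fix v assume "v \<in> set xs"
    then obtain j where j: "j < length xs" "xs!j = v" by (auto simp: in_set_conv_nth)
    show "v \<in> S"
    proof (cases j)
      case 0 then show ?thesis using j xs(2,3) \<open>p1 \<in> S\<close> by (simp add: hd_conv_nth)
    next
      case (Suc j') then show ?thesis using j xs(5) by force
    qed
  qed
  have "is_cycle E (xs @ [w])"
    unfolding is_cycle_def
  proof (intro conjI allI impI)
    show "3 \<le> length (xs @ [w])" using len by simp
    show "distinct (xs @ [w])" using xs(1) in_S w(1) by auto
    show "E (last (xs @ [w])) (hd (xs @ [w]))" using xs(2,3) w by simp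
    fix j assume j: "Suc j < length (xs @ [w])"
    show "E ((xs @ [w])!j) ((xs @ [w])!Suc j)"
    proof (cases "Suc j < length xs")
      case True then show ?thesis using xs(5) by (simp add: nth_append)
    next
      case False
      then have "j = length xs - 1" "Suc j = length xs" using j by auto
      then show ?thesis using xs(2,4) w \<open>symp E\<close> by (auto simp: nth_append last_conv_nth dest: sympD)
    qed
  qed
  then show False using acyc by blast
qed

lemma rtranclp_exit_edge:
  assumes "Q\<^sup>*\<^sup>* a v" "a \<in> S" "v \<notin> S"
  shows "\<exists>p w. p \<in> S \<and> w \<notin> S \<and> Q p w"
  using assms by (induction rule: rtranclp_induct) auto

lemma components_eq:
  assumes "symp E" and K: "K \<in> components E W" and "a \<in> K"
  shows "K = {y\<in>W. (induced E W)\<^sup>*\<^sup>* a y}"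
proof -
  obtain x where x: "x \<in> W" "K = {y\<in>W. (induced E W)\<^sup>*\<^sup>* x y}"
    using K unfolding components_def by auto
  have xa: "(induced E W)\<^sup>*\<^sup>* x a" using \<open>a \<in> K\<close> x by auto
  then have "(induced E W)\<^sup>*\<^sup>* a x"
    using symp_rtranclp[OF symp_induced[OF \<open>symp E\<close>]] by (blast dest: sympD)
  then show ?thesis using x xa by (auto intro: rtranclp_trans)
qed

lemma components_subset: "K \<in> components E W \<Longrightarrow> K \<subseteq> W"
  unfolding components_def by auto

lemma components_closed:
  assumes "symp E" "K \<in> components E W" "u \<in> K" "v \<in> W" "E u v"
  shows "v \<in> K"
  using components_eq[OF assms(1-3)] components_subset[OF assms(2)] assms(3-5) by auto

lemma components_disjoint:
  assumes "symp E" "K1 \<in> components E W" "K2 \<in> components E W" "v \<in> K1" "v \<in> K2"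
  shows "K1 = K2"
  using components_eq[OF assms(1,2,4)] components_eq[OF assms(1,3,5)] by simp

lemma components_cover: "v \<in> W \<Longrightarrow> \<exists>K\<in>components E W. v \<in> K"
  unfolding components_def by auto

lemma finite_components: "finite W \<Longrightarrow> finite (components E W)"
  by (rule finite_subset[of _ "Pow W"]) (auto simp: components_def)

lemma components_connected:
  assumes "symp E" and K: "K \<in> components E W" and "a \<in> K" "v \<in> K"
  shows "(induced E K)\<^sup>*\<^sup>* a v"
proof -
  have "(induced E W)\<^sup>*\<^sup>* a v" using components_eq[OF assms(1-3)] \<open>v \<in> K\<close> by auto
  then have "v \<in> K \<and> (induced E K)\<^sup>*\<^sup>* a v"
  proof (induction rule: rtranclp_induct)
    case base then show ?case using \<open>a \<in> K\<close> by simp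
  next
    case (step y z)
    then have "z \<in> K" using components_closed[OF \<open>symp E\<close> K] by blast
    then show ?case using step by (auto intro: rtranclp.rtrancl_into_rtrancl)
  qed
  then show ?thesis by simp
qed

lemma connected_insert:
  assumes conn: "\<forall>v\<in>S. (induced E S)\<^sup>*\<^sup>* a v" and "p \<in> S" "E p w"
  shows "\<forall>v\<in>insert w S. (induced E (insert w S))\<^sup>*\<^sup>* a v"
proof
  fix x assume x: "x \<in> insert w S"
  have mono: "(induced E (insert w S))\<^sup>*\<^sup>* a y" if "(induced E S)\<^sup>*\<^sup>* a y" for y
    by (rule rtranclp_mono[THEN predicate2D, OF _ that]) auto
  show "(induced E (insert w S))\<^sup>*\<^sup>* a x"
  proof (cases "x = w")
    case True
    have "(induced E (insert w S))\<^sup>*\<^sup>* a p" using mono conn \<open>p \<in> S\<close> by blast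
    then show ?thesis using True \<open>p \<in> S\<close> \<open>E p w\<close> by (auto intro: rtranclp.rtrancl_into_rtrancl)
  next
    case False then show ?thesis using mono conn x by auto
  qed
qed

text \<open>The new vertex \<open>w\<close> has only one neighbour in \<open>S\<close>, so only one adjacency has to be
  respected, and its \<open>card K\<close> candidates cannot all be used up by the fewer than \<open>card K\<close>
  vertices of \<open>S\<close>.\<close>
lemma greedy_tree_step:
  fixes EF :: "'b \<Rightarrow> 'b \<Rightarrow> bool" and E :: "'a \<Rightarrow> 'a \<Rightarrow> bool"
  assumes "finite K" and acyc: "\<not> (\<exists>xs. is_cycle EF xs)" and "symp EF" "\<forall>x. \<not> EF x x"
    and "symp E"
    and ext: "\<forall>p w u. p \<in> K \<longrightarrow> w \<in> K \<longrightarrow> EF p w \<longrightarrow> Good p u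
                \<longrightarrow> card K \<le> card {v. Good w v \<and> E u v}"
    and S: "S \<subset> K" "a \<in> S" "\<forall>v\<in>S. (induced EF S)\<^sup>*\<^sup>* a v"
    and \<phi>: "inj_on \<phi> S" "\<forall>w\<in>S. Good w (\<phi> w)" "\<forall>x\<in>S. \<forall>y\<in>S. EF x y \<longrightarrow> E (\<phi> x) (\<phi> y)"
    and conn: "\<forall>v\<in>K. (induced EF K)\<^sup>*\<^sup>* a v"
  shows "\<exists>w \<phi>'. w \<in> K - S \<and> (\<forall>v\<in>insert w S. (induced EF (insert w S))\<^sup>*\<^sup>* a v)
    \<and> inj_on \<phi>' (insert w S) \<and> (\<forall>v\<in>insert w S. Good v (\<phi>' v))
    \<and> (\<forall>x\<in>insert w S. \<forall>y\<in>insert w S. EF x y \<longrightarrow> E (\<phi>' x) (\<phi>' y))"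
proof -
  have "finite S" using S(1) \<open>finite K\<close> finite_subset by auto
  obtain v where "v \<in> K" "v \<notin> S" using S(1) by auto
  then obtain p w where pw: "p \<in> S" "w \<notin> S" "w \<in> K" "EF p w"
    using rtranclp_exit_edge[OF conn[rule_format, OF \<open>v \<in> K\<close>] S(2)] by blast
  let ?cand = "{v. Good w v \<and> E (\<phi> p) v}"
  have card_cand: "card K \<le> card ?cand" using ext S(1) pw \<phi>(2) by blast
  have "card (\<phi> ` S) < card K"
    using card_image_le[OF \<open>finite S\<close>, of \<phi>] psubset_card_mono[OF \<open>finite K\<close> S(1)] by linarith
  then have "\<not> ?cand \<subseteq> \<phi> ` S"
    using card_cand card_mono[OF finite_imageI[OF \<open>finite S\<close>]] by fastforce
  then obtain u where u: "Good w u" "E (\<phi> p) u" "u \<notin> \<phi> ` S" by blast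
  have "EF w p" using pw(4) \<open>symp EF\<close> by (blast dest: sympD)
  then have only_p: "y = p" if "y \<in> S" "EF w y" for y
    using acyclic_unique_neighbour[OF acyc \<open>symp EF\<close> S(3) _ pw(1,2)] that by blast
  define \<phi>' where "\<phi>' = \<phi>(w := u)"
  have "\<forall>v\<in>insert w S. (induced EF (insert w S))\<^sup>*\<^sup>* a v"
    by (rule connected_insert[OF S(3) pw(1,4)])
  moreover have "inj_on \<phi>' (insert w S)"
    using \<phi>(1) u(3) pw(2) unfolding \<phi>'_def by (auto simp: inj_on_def image_iff)
  moreover have "\<forall>v\<in>insert w S. Good v (\<phi>' v)"
    using \<phi>(2) u(1) pw(2) unfolding \<phi>'_def by auto
  moreover have "E (\<phi>' x) (\<phi>' y)" if xy: "x \<in> insert w S" "y \<in> insert w S" "EF x y" for x y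
  proof -
    have "EF y x" using xy(3) \<open>symp EF\<close> by (blast dest: sympD)
    then consider "x = w" "y = p" | "y = w" "x = p" | "x \<in> S" "y \<in> S"
      using xy only_p \<open>\<forall>x. \<not> EF x x\<close> by blast
    then show ?thesis
      using \<phi>(3) u(2) pw(1,2) \<open>symp E\<close> xy(3) unfolding \<phi>'_def
      by cases (auto dest: sympD)
  qed
  ultimately show ?thesis using pw by blast
qed

lemma greedy_tree_embedding:
  fixes EF :: "'b \<Rightarrow> 'b \<Rightarrow> bool" and E :: "'a \<Rightarrow> 'a \<Rightarrow> bool"
  assumes "finite K" "a \<in> K" and conn: "\<forall>v\<in>K. (induced EF K)\<^sup>*\<^sup>* a v"
    and "\<not> (\<exists>xs. is_cycle EF xs)" "symp EF" "\<forall>x. \<not> EF x x" "symp E"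
    and "Good a v0"
    and ext: "\<And>p w u. p \<in> K \<Longrightarrow> w \<in> K \<Longrightarrow> EF p w \<Longrightarrow> Good p u
                \<Longrightarrow> card K \<le> card {v. Good w v \<and> E u v}"
  shows "\<exists>\<phi>. inj_on \<phi> K \<and> (\<forall>w\<in>K. Good w (\<phi> w)) \<and> (\<forall>x\<in>K. \<forall>y\<in>K. EF x y \<longrightarrow> E (\<phi> x) (\<phi> y))"
proof -
  define P where "P S \<longleftrightarrow> S \<subseteq> K \<and> a \<in> S \<and> (\<forall>v\<in>S. (induced EF S)\<^sup>*\<^sup>* a v)
      \<and> (\<exists>\<phi>. inj_on \<phi> S \<and> (\<forall>w\<in>S. Good w (\<phi> w)) \<and> (\<forall>x\<in>S. \<forall>y\<in>S. EF x y \<longrightarrow> E (\<phi> x) (\<phi> y)))"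
    for S
  have "P {a}" unfolding P_def
    using \<open>a \<in> K\<close> \<open>Good a v0\<close> \<open>\<forall>x. \<not> EF x x\<close> by (intro conjI exI[of _ "\<lambda>_. v0"]) auto
  moreover have "\<forall>S. P S \<longrightarrow> card S < Suc (card K)"
    unfolding P_def using \<open>finite K\<close> by (auto simp: less_Suc_eq_le card_mono)
  ultimately obtain S where S: "P S" and max: "\<And>S'. P S' \<Longrightarrow> card S' \<le> card S"
    using Lattices_Big.ex_has_greatest_nat[of P "{a}" card] by blast
  have ext': "\<forall>p w u. p \<in> K \<longrightarrow> w \<in> K \<longrightarrow> EF p w \<longrightarrow> Good p u
                \<longrightarrow> card K \<le> card {v. Good w v \<and> E u v}"
    using ext by blast
  have "S = K"
  proof (rule ccontr)
    assume "S \<noteq> K"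
    then have "S \<subset> K" using S unfolding P_def by blast
    from S obtain \<phi> where "a \<in> S" "\<forall>v\<in>S. (induced EF S)\<^sup>*\<^sup>* a v" "inj_on \<phi> S"
      "\<forall>w\<in>S. Good w (\<phi> w)" "\<forall>x\<in>S. \<forall>y\<in>S. EF x y \<longrightarrow> E (\<phi> x) (\<phi> y)"
      unfolding P_def by blast
    from greedy_tree_step[OF assms(1,4-7) ext' \<open>S \<subset> K\<close> this conn]
    obtain w \<phi>' where "w \<in> K - S"
      "\<forall>v\<in>insert w S. (induced EF (insert w S))\<^sup>*\<^sup>* a v" "inj_on \<phi>' (insert w S)"
      "\<forall>v\<in>insert w S. Good v (\<phi>' v)"
      "\<forall>x\<in>insert w S. \<forall>y\<in>insert w S. EF x y \<longrightarrow> E (\<phi>' x) (\<phi>' y)"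
      by blast
    then have "P (insert w S)"
      using \<open>S \<subset> K\<close> \<open>a \<in> S\<close> unfolding P_def by auto
    moreover have "finite S" using \<open>S \<subset> K\<close> \<open>finite K\<close> finite_subset by auto
    ultimately show False using max[of "insert w S"] \<open>w \<in> K - S\<close> by simp
  qed
  then show ?thesis using S unfolding P_def by blast
qed

section \<open>Skew LKS-graphs\<close>

locale skew_LKS_graph =
  fixes r \<epsilon> d :: real and V :: "'a set" and E :: "'a \<Rightarrow> 'a \<Rightarrow> bool"
    and LC SC :: "'a set set" and k :: nat and \<eta>' :: real
  assumes skew_LKS: "skew_LKS r V E LC SC k \<eta>' \<epsilon> d"
    and r_pos: "0 < r" and r_le_half: "r \<le> 1/2" and eps_pos: "0 < \<epsilon>" and eps_le_1: "\<epsilon> \<le> 1"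
begin

abbreviation clusters :: "'a set set" where "clusters \<equiv> LC \<union> SC"

definition q :: real where "q = (1 - r) / r"

lemma q_ge_1: "q \<ge> 1"
  using r_pos r_le_half unfolding q_def by (simp add: field_simps)

lemma r_mult_q: "r * q = 1 - r"
  using r_pos unfolding q_def by simp

lemma graph: "graph V E"
  using skew_LKS unfolding skew_LKS_def by (elim conjE) assumption

lemma LC_SC_disjoint: "LC \<inter> SC = {}"
  using skew_LKS unfolding skew_LKS_def by (elim conjE) assumption

lemma Union_clusters: "\<Union>clusters = V"
  using skew_LKS unfolding skew_LKS_def by (elim conjE) assumption

lemma clusters_nonempty: "\<forall>C \<in> clusters. C \<noteq> {}"
  using skew_LKS unfolding skew_LKS_def by (elim conjE) assumption

lemma clusters_pairwise_disjoint: "\<forall>C \<in> clusters. \<forall>C' \<in> clusters. C \<noteq> C' \<longrightarrow> C \<inter> C' = {}"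
  using skew_LKS unfolding skew_LKS_def by (elim conjE) assumption

lemma card_L_clusters_eq: "\<forall>L \<in> LC. \<forall>L' \<in> LC. card L = card L'"
  using skew_LKS unfolding skew_LKS_def by (elim conjE) assumption

lemma card_S_clusters_eq: "\<forall>S \<in> SC. \<forall>S' \<in> SC. card S = card S'"
  using skew_LKS unfolding skew_LKS_def by (elim conjE) assumption

lemma card_S_L_ratio: "\<forall>L \<in> LC. \<forall>S \<in> SC. r * real (card S) = (1 - r) * real (card L)"
  using skew_LKS unfolding skew_LKS_def by (elim conjE) assumption

lemma regular_LL: "\<forall>L \<in> LC. \<forall>L' \<in> LC. L \<noteq> L' \<longrightarrow>
    regular_pair E \<epsilon> L L' \<and> (density E L L' = 0 \<or> density E L L' \<ge> d)"
  using skew_LKS unfolding skew_LKS_def by (elim conjE) assumption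

lemma regular_LS: "\<forall>L \<in> LC. \<forall>S \<in> SC.
    regular_pair E \<epsilon> L S \<and> (density E L S = 0 \<or> density E L S \<ge> d)"
  using skew_LKS unfolding skew_LKS_def by (elim conjE) assumption

lemma no_edge_inside_cluster: "\<forall>C \<in> clusters. \<forall>x\<in>C. \<forall>y\<in>C. \<not> E x y"
  using skew_LKS unfolding skew_LKS_def by (elim conjE) assumption

lemma no_edge_between_S_clusters:
  "\<forall>S \<in> SC. \<forall>S' \<in> SC. S \<noteq> S' \<longrightarrow> (\<forall>x\<in>S. \<forall>y\<in>S'. \<not> E x y)"
  using skew_LKS unfolding skew_LKS_def by (elim conjE) assumption

lemma symp_E: "symp E"
  using graph unfolding graph_def symp_def by blast

lemma finite_V: "finite V"
  using graph unfolding graph_def by blast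

lemma cluster_subset: "X \<in> clusters \<Longrightarrow> X \<subseteq> V"
  using Union_clusters by blast

lemma finite_cluster: "X \<in> clusters \<Longrightarrow> finite X"
  using cluster_subset finite_V finite_subset by blast

lemma finite_clusters: "finite clusters"
  using Union_clusters finite_V by (metis finite_UnionD)

lemma card_cluster_pos: "X \<in> clusters \<Longrightarrow> card X > 0"
  using clusters_nonempty finite_cluster by (simp add: card_gt_0_iff)

lemma clusters_disjoint: "X \<in> clusters \<Longrightarrow> Y \<in> clusters \<Longrightarrow> X \<noteq> Y \<Longrightarrow> X \<inter> Y = {}"
  using clusters_pairwise_disjoint by blast

lemma cluster_unique: "X \<in> clusters \<Longrightarrow> Y \<in> clusters \<Longrightarrow> x \<in> X \<Longrightarrow> x \<in> Y \<Longrightarrow> X = Y"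
  using clusters_disjoint by blast

lemma card_S_cluster: "L \<in> LC \<Longrightarrow> S \<in> SC \<Longrightarrow> real (card S) = q * card L"
  using card_S_L_ratio r_pos unfolding q_def by (simp add: field_simps)

lemma no_edge_S_clusters: "S \<in> SC \<Longrightarrow> S' \<in> SC \<Longrightarrow> x \<in> S \<Longrightarrow> y \<in> S' \<Longrightarrow> \<not> E x y"
  using no_edge_between_S_clusters no_edge_inside_cluster by (cases "S = S'") blast+

lemma card_cluster_le: "X \<in> clusters \<Longrightarrow> Y \<in> clusters \<Longrightarrow> real (card Y) \<le> q * card X"
proof -
  assume X: "X \<in> clusters" and Y: "Y \<in> clusters"
  have le_q: "real m \<le> q * m" for m :: nat
    using mult_right_mono[OF q_ge_1, of "real m"] by simp
  consider "X \<in> LC" "Y \<in> LC" | "X \<in> SC" "Y \<in> SC" | "Y \<in> SC" "X \<in> LC" | "X \<in> SC" "Y \<in> LC"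
    using X Y by blast
  then show ?thesis
  proof cases
    case 4
    then have "real (card Y) \<le> card X" using card_S_cluster le_q by metis
    also have "\<dots> \<le> q * card X" by (rule le_q)
    finally show ?thesis .
  next
    case 1
    then have "card Y = card X" using card_L_clusters_eq by blast
    then show ?thesis using le_q by metis
  next
    case 2
    then have "card Y = card X" using card_S_clusters_eq by blast
    then show ?thesis using le_q by metis
  next
    case 3
    then show ?thesis using card_S_cluster by simp
  qed
qed

lemma sum_card_clusters: "(\<Sum>X\<in>clusters. real (card X)) = card V"
proof -
  have "card (\<Union>clusters) = sum card clusters"
    by (rule card_Union_disjoint)
      (use clusters_pairwise_disjoint finite_cluster in \<open>auto simp: pairwise_def disjnt_def\<close>)
  then show ?thesis using Union_clusters by simp
qed

lemma card_clusters_mult_le: "X \<in> clusters \<Longrightarrow> real (card clusters) * card X \<le> q * card V"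
proof -
  assume X: "X \<in> clusters"
  have "real (card clusters) * card X = (\<Sum>Y\<in>clusters. real (card X))" by simp
  also have "\<dots> \<le> (\<Sum>Y\<in>clusters. q * card Y)"
    by (rule sum_mono) (use card_cluster_le X in auto)
  also have "\<dots> = q * card V" unfolding sum_distrib_left[symmetric] sum_card_clusters ..
  finally show ?thesis .
qed

lemma card_V_le: "X \<in> clusters \<Longrightarrow> r * card V \<le> real (card clusters) * card X"
proof -
  assume X: "X \<in> clusters"
  have "r * card V = r * (\<Sum>Y\<in>clusters. real (card Y))" by (simp add: sum_card_clusters)
  also have "\<dots> \<le> r * (\<Sum>Y\<in>clusters. q * card X)"
    using r_pos by (intro mult_left_mono sum_mono) (use card_cluster_le X in auto)
  also have "\<dots> = (r * q) * (real (card clusters) * card X)" by (simp add: algebra_simps)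
  also have "\<dots> = (1 - r) * (real (card clusters) * card X)" unfolding r_mult_q ..
  also have "\<dots> \<le> real (card clusters) * card X"
    using r_pos r_le_half by (intro mult_left_le_one_le) auto
  finally show ?thesis .
qed

lemma card_V_div_le_cluster:
  assumes "card clusters \<le> N" "X \<in> clusters"
  shows "r * card V / (real N + 1) \<le> card X"
proof -
  have "real (card clusters) * card X \<le> (real N + 1) * card X"
    using assms(1) by (intro mult_right_mono) auto
  then have "r * card V \<le> (real N + 1) * card X" using card_V_le[OF assms(2)] by linarith
  then show ?thesis by (simp add: divide_le_eq mult.commute)
qed

lemma card_atypical_to_cluster:
  assumes X: "X \<in> LC" and Y: "Y \<in> clusters"
  shows "real (card {x\<in>X. Y \<noteq> X \<and> \<not> typical E \<epsilon> X Y x}) \<le> \<epsilon> * card X"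
proof (cases "Y = X")
  case True then show ?thesis using eps_pos by simp
next
  case False
  have "X \<in> clusters" using X by simp
  have "regular_pair E \<epsilon> X Y" using regular_LL X regular_LS False Y by blast
  moreover have "\<epsilon> * card Y \<le> card Y" using eps_le_1 eps_pos by (intro mult_left_le_one_le) auto
  ultimately have "real (card {x\<in>X. real (card {y\<in>Y. E x y}) < (density E X Y - \<epsilon>) * card Y})
      < \<epsilon> * card X"
    using regular_pair_few_low_degree[OF _ finite_cluster[OF \<open>X \<in> clusters\<close>] finite_cluster[OF Y] _ subset_refl]
      card_cluster_pos[OF \<open>X \<in> clusters\<close>] card_cluster_pos[OF Y] eps_pos by fastforce
  moreover have "{x\<in>X. Y \<noteq> X \<and> \<not> typical E \<epsilon> X Y x} =
      {x\<in>X. real (card {y\<in>Y. E x y}) < (density E X Y - \<epsilon>) * card Y}"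
    using False unfolding typical_def by (simp add: not_le)
  ultimately show ?thesis by simp
qed

text \<open>Double counting the pairs \<open>(x, Y)\<close> with \<open>x\<close> atypical to \<open>Y\<close>: each cluster
  \<open>Y\<close> contributes at most \<open>\<epsilon> |X|\<close> by regularity, while each non-ultratypical \<open>x\<close>
  is counted more than \<open>\<surd>\<epsilon> |clusters|\<close> times.\<close>
lemma card_not_ultratypical:
  assumes X: "X \<in> LC"
  shows "real (card {x\<in>X. \<not> ultratypical E \<epsilon> clusters x}) \<le> sqrt \<epsilon> * card X"
proof -
  define atyp where "atyp x = card {Y\<in>clusters. Y \<noteq> X \<and> \<not> typical E \<epsilon> X Y x}" for x
  have "X \<in> clusters" using X by simp
  then have "finite X" using finite_cluster by auto
  have "real (\<Sum>x\<in>X. atyp x) = (\<Sum>Y\<in>clusters. real (card {x\<in>X. Y \<noteq> X \<and> \<not> typical E \<epsilon> X Y x}))"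
    unfolding atyp_def sum_card_swap[OF \<open>finite X\<close> finite_clusters] by simp
  also have "\<dots> \<le> card clusters * (\<epsilon> * card X)"
    using sum_mono[of clusters _ "\<lambda>_. \<epsilon> * card X"] card_atypical_to_cluster[OF X] by simp
  finally have sum_atyp: "real (\<Sum>x\<in>X. atyp x) \<le> card clusters * (\<epsilon> * card X)" .
  define NU where "NU = {x\<in>X. \<not> ultratypical E \<epsilon> clusters x}"
  have "sqrt \<epsilon> * card clusters \<le> atyp x" if "x \<in> NU" for x
    using that \<open>X \<in> clusters\<close> unfolding NU_def ultratypical_def atyp_def by force
  then have "card NU * (sqrt \<epsilon> * card clusters) \<le> (\<Sum>x\<in>NU. real (atyp x))"
    using sum_mono[of NU "\<lambda>_. sqrt \<epsilon> * card clusters"] by simp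
  also have "\<dots> \<le> (\<Sum>x\<in>X. real (atyp x))"
    by (rule sum_mono2[OF \<open>finite X\<close>]) (auto simp: NU_def)
  also have "\<dots> \<le> (sqrt \<epsilon> * sqrt \<epsilon>) * (card X * card clusters)"
    using sum_atyp eps_pos by (simp add: algebra_simps)
  also have "\<dots> = (sqrt \<epsilon> * card X) * (sqrt \<epsilon> * card clusters)"
    by (simp add: algebra_simps)
  finally have "real (card NU) * (sqrt \<epsilon> * card clusters) \<le> (sqrt \<epsilon> * card X) * (sqrt \<epsilon> * card clusters)" .
  moreover have "sqrt \<epsilon> * card clusters > 0"
  proof -
    have "card clusters > 0" using \<open>X \<in> clusters\<close> finite_clusters card_gt_0_iff by blast
    then show ?thesis using eps_pos by simp
  qed
  ultimately show ?thesis unfolding NU_def using mult_right_le_imp_le by blast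
qed

end

locale skew_LKS_matching = skew_LKS_graph +
  fixes M :: "('a set \<times> 'a set) set"
  assumes LS_matching: "LS_matching E LC SC M"
begin

lemma matching_edge: "p \<in> M \<Longrightarrow> fst p \<in> SC \<and> snd p \<in> LC \<and> density E (fst p) (snd p) > 0"
  using LS_matching unfolding LS_matching_def by auto

lemma finite_matching: "finite M"
  by (rule finite_subset[of _ "clusters \<times> clusters"]) (use matching_edge finite_clusters in auto)

lemma matching_dense: "p \<in> M \<Longrightarrow> density E (snd p) (fst p) \<ge> d \<and> density E (fst p) (snd p) \<ge> d"
  using matching_edge regular_LS density_commute[OF symp_E] by (metis less_irrefl)

lemma matching_regular: "p \<in> M \<Longrightarrow> regular_pair E \<epsilon> (snd p) (fst p) \<and> regular_pair E \<epsilon> (fst p) (snd p)"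
  using matching_edge regular_LS regular_pair_commute[OF symp_E] by blast

lemma matching_distinct: "p \<in> M \<Longrightarrow> p' \<in> M \<Longrightarrow> p \<noteq> p' \<Longrightarrow> fst p \<noteq> fst p' \<and> snd p \<noteq> snd p'"
  using LS_matching unfolding LS_matching_def by blast

lemma matching_fst_disjoint:
  assumes "p \<in> M" "p' \<in> M" "p \<noteq> p'"
  shows "fst p \<inter> fst p' = {}"
proof (rule clusters_disjoint)
  show "fst p \<in> clusters" "fst p' \<in> clusters" using matching_edge assms by blast+
  show "fst p \<noteq> fst p'" using matching_distinct assms by blast
qed

lemma matching_snd_disjoint:
  assumes "p \<in> M" "p' \<in> M" "p \<noteq> p'"
  shows "snd p \<inter> snd p' = {}"
proof (rule clusters_disjoint)
  show "snd p \<in> clusters" "snd p' \<in> clusters" using matching_edge assms by blast+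
  show "snd p \<noteq> snd p'" using matching_distinct assms by blast
qed

lemma matching_fst_snd_disjoint:
  assumes "p \<in> M" "p' \<in> M"
  shows "fst p \<inter> snd p' = {}"
proof (rule clusters_disjoint)
  have "fst p \<in> SC" "snd p' \<in> LC" using matching_edge[OF assms(1)] matching_edge[OF assms(2)] by simp_all
  then show "fst p \<in> clusters" "snd p' \<in> clusters" "fst p \<noteq> snd p'"
    using LC_SC_disjoint by auto
qed

lemma sum_card_fst_le: "(\<Sum>p\<in>M. real (card (fst p))) \<le> card V"
proof -
  have "card (\<Union>p\<in>M. fst p) = (\<Sum>p\<in>M. card (fst p))"
  proof (rule card_UN_disjoint[OF finite_matching])
    show "\<forall>p\<in>M. finite (fst p)" using matching_edge finite_cluster by simp
    show "\<forall>p\<in>M. \<forall>p'\<in>M. p \<noteq> p' \<longrightarrow> fst p \<inter> fst p' = {}"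
      using matching_fst_disjoint by simp
  qed
  moreover have "card (\<Union>p\<in>M. fst p) \<le> card V"
    using matching_edge cluster_subset finite_V by (intro card_mono) blast+
  ultimately show ?thesis by (metis of_nat_le_iff of_nat_sum)
qed

lemma avg_deg_matching:
  assumes A: "A \<in> clusters"
  shows "avg_deg E A (fst ` M) = (\<Sum>p\<in>M. density E A (fst p) * card (fst p))"
proof -
  have "finite A" "card A > 0" using A finite_cluster card_cluster_pos by auto
  have fin: "finite (fst p)" "card (fst p) > 0" if "p \<in> M" for p
    using that matching_edge finite_cluster card_cluster_pos by blast+
  have split: "card {y \<in> \<Union>(fst ` M). E a y} = (\<Sum>p\<in>M. card {y\<in>fst p. E a y})" for a
  proof -
    have "{y \<in> \<Union>(fst ` M). E a y} = (\<Union>p\<in>M. {y\<in>fst p. E a y})" by auto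
    moreover have "card (\<Union>p\<in>M. {y\<in>fst p. E a y}) = (\<Sum>p\<in>M. card {y\<in>fst p. E a y})"
    proof (rule card_UN_disjoint[OF finite_matching])
      show "\<forall>p\<in>M. finite {y\<in>fst p. E a y}" using fin by simp
      show "\<forall>p\<in>M. \<forall>p'\<in>M. p \<noteq> p' \<longrightarrow> {y\<in>fst p. E a y} \<inter> {y\<in>fst p'. E a y} = {}"
        using matching_fst_disjoint by blast
    qed
    ultimately show ?thesis by simp
  qed
  have "(\<Sum>a\<in>A. card {y \<in> \<Union>(fst ` M). E a y}) = (\<Sum>p\<in>M. \<Sum>a\<in>A. card {y\<in>fst p. E a y})"
    unfolding split by (rule sum.swap)
  also have "\<dots> = (\<Sum>p\<in>M. card (edges_between E A (fst p)))"
    using card_edges_between[OF \<open>finite A\<close>] fin by simp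
  finally have "avg_deg E A (fst ` M) = (\<Sum>p\<in>M. real (card (edges_between E A (fst p))) / card A)"
    unfolding avg_deg_def of_nat_sum[symmetric] by (simp add: sum_divide_distrib)
  also have "\<dots> = (\<Sum>p\<in>M. density E A (fst p) * card (fst p))"
  proof (rule sum.cong)
    fix p assume "p \<in> M"
    then show "real (card (edges_between E A (fst p))) / card A = density E A (fst p) * card (fst p)"
      using \<open>card A > 0\<close> fin[of p] unfolding density_def by (simp add: field_simps card_gt_0_iff)
  qed simp
  finally show ?thesis .
qed

text \<open>Each atypical matching edge is an atypical cluster, and distinct matching edges
  have distinct S-clusters.\<close>
lemma card_atypical_matching_edges:
  assumes A: "A \<in> LC" and x: "x \<in> A" "ultratypical E \<epsilon> clusters x"
  shows "real (card {p\<in>M. \<not> typical E \<epsilon> A (fst p) x}) \<le> sqrt \<epsilon> * card clusters"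
proof -
  obtain X where X: "X \<in> clusters" "x \<in> X"
    "real (card {Y \<in> clusters. Y \<noteq> X \<and> \<not> typical E \<epsilon> X Y x}) \<le> sqrt \<epsilon> * card clusters"
    using x unfolding ultratypical_def by blast
  have "X = A" using cluster_unique X A x by blast
  let ?T = "{p\<in>M. \<not> typical E \<epsilon> A (fst p) x}"
  have "inj_on fst ?T" by (rule inj_onI) (use matching_distinct in blast)
  moreover have "fst ` ?T \<subseteq> {Y \<in> clusters. Y \<noteq> A \<and> \<not> typical E \<epsilon> A Y x}"
    using matching_edge A LC_SC_disjoint by fastforce
  ultimately have "card ?T \<le> card {Y \<in> clusters. Y \<noteq> A \<and> \<not> typical E \<epsilon> A Y x}"
    by (metis (no_types, lifting) card_image card_mono finite_clusters finite_subset mem_Collect_eq subsetI)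
  then show ?thesis using X(3) unfolding \<open>X = A\<close> by linarith
qed

end

section \<open>Anchored forests\<close>

locale anchored_bipartite_forest =
  fixes VF :: "'b set" and EF :: "'b \<Rightarrow> 'b \<Rightarrow> bool" and R F1 F2 :: "'b set" and \<tau> :: real
  assumes anchored: "anchored_forest VF EF R \<tau>"
    and colours: "colour_classes VF EF F1 F2" and R_F2: "R \<subseteq> F2"
begin

definition anchors :: "'b set \<Rightarrow> 'b set" where
  "anchors K = {x \<in> R. \<exists>y\<in>K. EF x y}"

lemma forest: "forest VF EF"
  using anchored unfolding anchored_forest_def by (elim conjE) assumption

lemma R_subset: "R \<subseteq> VF"
  using anchored unfolding anchored_forest_def by (elim conjE) assumption

lemma components_anchored: "\<forall>K \<in> components EF (VF - R).
    2 \<le> card K \<and> real (card K) \<le> \<tau> \<and> 1 \<le> card (anchors K) \<and> card (anchors K) \<le> 2"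
  using anchored unfolding anchored_forest_def anchors_def by (elim conjE) assumption

lemma anchors_far_apart: "\<forall>x\<in>R. \<forall>y\<in>R. x \<noteq> y \<longrightarrow> dist_at_least EF 4 x y"
  using anchored unfolding anchored_forest_def by (elim conjE) assumption

lemma symp_EF: "symp EF"
  using forest unfolding forest_def graph_def symp_def by blast

lemma irrefl_EF: "\<forall>x. \<not> EF x x"
  using forest unfolding forest_def graph_def by blast

lemma finite_VF: "finite VF"
  using forest unfolding forest_def graph_def by blast

lemma edge_in_VF: "EF x y \<Longrightarrow> x \<in> VF \<and> y \<in> VF"
  using forest unfolding forest_def graph_def by blast

lemma acyclic: "\<not> (\<exists>xs. is_cycle EF xs)"
  using forest unfolding forest_def by blast

lemma F1_Un_F2: "F1 \<union> F2 = VF" and F1_Int_F2: "F1 \<inter> F2 = {}"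
  using colours unfolding colour_classes_def by blast+

lemma edge_colours: "EF x y \<Longrightarrow> (x \<in> F1 \<and> y \<in> F2) \<or> (x \<in> F2 \<and> y \<in> F1)"
  using colours unfolding colour_classes_def by blast

lemma anchor_neighbour_in_F1: "z \<in> R \<Longrightarrow> EF z y \<Longrightarrow> y \<in> F1"
  using edge_colours R_F2 F1_Int_F2 by blast

text \<open>Anchors are at distance at least 4.\<close>
lemma anchor_unique:
  assumes "x \<in> R" "y \<in> R" "EF x w" "EF y w"
  shows "x = y"
proof (rule ccontr)
  assume "x \<noteq> y"
  have "walk EF [x, w, y]"
    using assms(3,4) symp_EF unfolding walk_def by (auto simp: less_Suc_eq nth_Cons' dest: sympD)
  then show False
    using anchors_far_apart assms(1,2) \<open>x \<noteq> y\<close> unfolding dist_at_least_def by force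
qed

context
  fixes K assumes K: "K \<in> components EF (VF - R)"
begin

lemma component_subset: "K \<subseteq> VF - R"
  using components_subset[OF K] .

lemma finite_component: "finite K"
  using component_subset finite_VF finite_subset by blast

lemma card_component_le: "real (card K) \<le> \<tau>"
  using components_anchored K by blast

lemma card_anchors: "1 \<le> card (anchors K)" "card (anchors K) \<le> 2"
  using components_anchored K by blast+

lemma anchors_subset: "anchors K \<subseteq> R"
  unfolding anchors_def by blast

lemma finite_anchors: "finite (anchors K)"
  by (rule finite_subset[OF _ finite_VF]) (use anchors_subset R_subset in auto)

end

end

section \<open>Embedding an anchored forest into a skew LKS-graph\<close>

locale tree_embedding_setting =
  skew_LKS_matching r \<epsilon> d V E LC SC k \<eta>' M +
  anchored_bipartite_forest VF EF R F1 F2 \<tau>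
  for r \<epsilon> d :: real and V :: "'a set" and E LC SC k \<eta>' M
    and VF :: "'b set" and EF R F1 F2 \<tau> +
  fixes \<eta> :: real and U A :: "'a set" and \<psi> :: "'b \<Rightarrow> 'a"
  assumes eta_pos: "0 < \<eta>"
    and sqrt_eps_le: "sqrt \<epsilon> \<le> r * \<eta> / 8" and eps_le_d: "\<epsilon> \<le> d * r * \<eta> / 96"
    and eps_le_half_d: "\<epsilon> \<le> d / 2"
    and components_small: "\<And>X. X \<in> clusters \<Longrightarrow> \<tau> \<le> min d 1 * r * \<eta> / 32 * card X"
    and balanced: "\<forall>K \<in> components EF (VF - R). card (F1 \<inter> K) \<le> card (F2 \<inter> K)"
    and A_cluster: "A \<in> clusters"
    and avg_deg_large: "avg_deg E A (fst ` M) \<ge> q * real (card F2)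
      + (\<Sum>(C, D) \<in> M. max (real (card (U \<inter> C))) (q * real (card (U \<inter> D)))) + \<eta> * card V"
    and \<psi>_inj: "inj_on \<psi> R" and \<psi>_image: "\<psi> ` R \<subseteq> {x \<in> A. ultratypical E \<epsilon> clusters x}"
begin

lemma eps_le_r_eta: "\<epsilon> \<le> r * \<eta> / 8"
proof -
  have "\<epsilon> \<le> sqrt \<epsilon>"
    using eps_pos eps_le_1 by (intro real_le_rsqrt) (simp add: power2_eq_square mult_left_le_one_le)
  then show ?thesis using sqrt_eps_le by linarith
qed

lemma eps_le_eta: "\<epsilon> \<le> \<eta> / 8"
proof -
  have "r * \<eta> \<le> \<eta>" using r_pos r_le_half eta_pos by (intro mult_left_le_one_le) auto
  then show ?thesis using eps_le_r_eta by linarith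
qed

lemma card_V_pos: "card V > 0"
  using card_cluster_pos[OF A_cluster] cluster_subset[OF A_cluster] finite_V
  by (metis card_mono gr0I le_0_eq)

text \<open>Vertices of an S-cluster have no neighbours in S-clusters, so the degree condition
  forces \<open>A\<close> to be an L-cluster.\<close>
lemma A_in_LC: "A \<in> LC"
proof (rule ccontr)
  assume "A \<notin> LC"
  then have "A \<in> SC" using A_cluster by auto
  then have "{y \<in> \<Union>(fst ` M). E a y} = {}" if "a \<in> A" for a
    using that matching_edge no_edge_S_clusters by fastforce
  then have "avg_deg E A (fst ` M) = 0"
    unfolding avg_deg_def by (metis (no_types, lifting) card.empty div_0 of_nat_0 sum.neutral)
  moreover have "(\<Sum>(C, D) \<in> M. max (real (card (U \<inter> C))) (q * real (card (U \<inter> D)))) \<ge> 0"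
    by (rule sum_nonneg) auto
  moreover have "q * real (card F2) \<ge> 0" using q_ge_1 by (intro mult_nonneg_nonneg) auto
  moreover have "\<eta> * card V > 0" using eta_pos card_V_pos by simp
  ultimately show False using avg_deg_large by linarith
qed

lemma card_component_le_cluster:
  "K \<in> components EF (VF - R) \<Longrightarrow> X \<in> clusters \<Longrightarrow> real (card K) \<le> min d 1 * r * \<eta> / 32 * card X"
  using card_component_le components_small by fastforce

text \<open>The expected number of neighbours of a vertex of \<open>A\<close> in the S-cluster of \<open>p\<close>.\<close>
definition weight :: "'a set \<times> 'a set \<Rightarrow> real" where
  "weight p = density E A (fst p) * card (fst p)"

definition U_load :: "'a set \<times> 'a set \<Rightarrow> real" where
  "U_load p = max (real (card (U \<inter> fst p))) (q * real (card (U \<inter> snd p)))"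

text \<open>\<open>I\<close> is the set of vertices used so far; \<open>(density E A C - \<epsilon>) |C|\<close> is the degree into
  the S-cluster \<open>C\<close> of a vertex of \<open>A\<close> typical to \<open>C\<close>.\<close>
definition roomy :: "'a set \<Rightarrow> 'a set \<times> 'a set \<Rightarrow> bool" where
  "roomy I p \<longleftrightarrow>
     r * \<eta> / 4 * card (fst p)
       \<le> (density E A (fst p) - \<epsilon>) * card (fst p) - card (U \<inter> fst p) - card (I \<inter> fst p)
   \<and> r * \<eta> / 4 * card (snd p) \<le> real (card (snd p)) - card (U \<inter> snd p) - card (I \<inter> snd p)"

lemma avg_deg_eq_sum_weight: "avg_deg E A (fst ` M) = (\<Sum>p\<in>M. weight p)"
  unfolding weight_def using avg_deg_matching[OF A_cluster] .

lemma sum_U_load: "(\<Sum>(C, D) \<in> M. max (real (card (U \<inter> C))) (q * real (card (U \<inter> D))))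
   = (\<Sum>p\<in>M. U_load p)"
  by (rule sum.cong) (auto simp: U_load_def)

lemma weight_le_card:
  assumes "p \<in> M"
  shows "weight p \<le> card (fst p)"
proof -
  have "finite (fst p)" using matching_edge[OF assms] finite_cluster by blast
  then have "density E A (fst p) \<le> 1" using density_le_1 finite_cluster[OF A_cluster] by blast
  then show ?thesis unfolding weight_def using density_nonneg by (intro mult_left_le_one_le) auto
qed

lemma sum_weight_atypical:
  assumes "Z \<subseteq> R" "finite Z" "card Z \<le> 2"
  shows "(\<Sum>p | p \<in> M \<and> (\<exists>z\<in>Z. \<not> typical E \<epsilon> A (fst p) (\<psi> z)). weight p)
    \<le> 2 * sqrt \<epsilon> * q * card V"
proof -
  define T where "T = {p. p \<in> M \<and> (\<exists>z\<in>Z. \<not> typical E \<epsilon> A (fst p) (\<psi> z))}"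
  have card_clusters_pos: "real (card clusters) > 0"
    using A_cluster finite_clusters card_gt_0_iff by fastforce
  have "T = (\<Union>z\<in>Z. {p\<in>M. \<not> typical E \<epsilon> A (fst p) (\<psi> z)})" unfolding T_def by auto
  then have "card T \<le> (\<Sum>z\<in>Z. card {p\<in>M. \<not> typical E \<epsilon> A (fst p) (\<psi> z)})"
    using card_UN_le[OF \<open>finite Z\<close>] by simp
  then have "real (card T) \<le> (\<Sum>z\<in>Z. real (card {p\<in>M. \<not> typical E \<epsilon> A (fst p) (\<psi> z)}))"
    by (simp only: of_nat_sum[symmetric] of_nat_le_iff)
  also have "\<dots> \<le> (\<Sum>z\<in>Z. sqrt \<epsilon> * card clusters)"
    using card_atypical_matching_edges[OF A_in_LC] \<psi>_image \<open>Z \<subseteq> R\<close> by (intro sum_mono) auto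
  also have "\<dots> \<le> 2 * (sqrt \<epsilon> * card clusters)"
    using \<open>card Z \<le> 2\<close> eps_pos by (simp add: mult_right_mono)
  finally have card_T: "real (card T) \<le> 2 * sqrt \<epsilon> * card clusters" by simp
  have "(\<Sum>p\<in>T. weight p) \<le> (\<Sum>p\<in>T. q * card V / card clusters)"
  proof (rule sum_mono)
    fix p assume "p \<in> T"
    then have "p \<in> M" unfolding T_def by blast
    then have "fst p \<in> clusters" using matching_edge by blast
    then have "real (card clusters) * card (fst p) \<le> q * card V" by (rule card_clusters_mult_le)
    then have "real (card (fst p)) \<le> q * card V / card clusters"
      using card_clusters_pos by (metis pos_le_divide_eq mult.commute)
    then show "weight p \<le> q * card V / card clusters"
      using weight_le_card[OF \<open>p \<in> M\<close>] by linarith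
  qed
  also have "\<dots> = card T * (q * card V / card clusters)" by simp
  also have "\<dots> \<le> (2 * sqrt \<epsilon> * card clusters) * (q * card V / card clusters)"
    using card_T q_ge_1 by (intro mult_right_mono) auto
  also have "\<dots> = 2 * sqrt \<epsilon> * q * card V" using card_clusters_pos by simp
  finally show ?thesis unfolding T_def .
qed

lemma weight_le_if_not_roomy:
  assumes "p \<in> M" "\<not> roomy I p" and I_bal: "card (I \<inter> fst p) \<le> card (I \<inter> snd p)"
  shows "weight p \<le> U_load p + q * card (I \<inter> snd p) + (r * \<eta> / 4 + \<epsilon>) * card (fst p)"
proof -
  define c where "c = real (card (fst p))"
  define u where "u = real (card (U \<inter> fst p))"
  define i where "i = real (card (I \<inter> fst p))"
  define c' where "c' = real (card (snd p))"
  define u' where "u' = real (card (U \<inter> snd p))"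
  define i' where "i' = real (card (I \<inter> snd p))"
  have c: "c = q * c'" unfolding c_def c'_def using card_S_cluster matching_edge \<open>p \<in> M\<close> by blast
  have "i \<le> q * i'"
    using I_bal mult_right_mono[OF q_ge_1, of i'] unfolding i_def i'_def by simp
  moreover have "u \<le> U_load p" "q * u' \<le> U_load p"
    unfolding U_load_def u_def u'_def by simp_all
  moreover have "0 \<le> \<epsilon> * c" using eps_pos unfolding c_def by simp
  moreover have "weight p \<le> c" using weight_le_card[OF \<open>p \<in> M\<close>] unfolding c_def .
  moreover have "(density E A (fst p) - \<epsilon>) * c - u - i < r * \<eta> / 4 * c
      \<or> c' - u' - i' < r * \<eta> / 4 * c'"
    using \<open>\<not> roomy I p\<close> unfolding roomy_def c_def u_def i_def c'_def u'_def i'_def by linarith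
  moreover have "q * (c' - u' - i') < q * (r * \<eta> / 4 * c')" if "c' - u' - i' < r * \<eta> / 4 * c'"
    using that q_ge_1 by simp
  ultimately show ?thesis
    unfolding weight_def c_def[symmetric] i'_def[symmetric] using c
    by (auto simp: algebra_simps)
qed

lemma error_terms_le: "2 * sqrt \<epsilon> * q + (r * \<eta> / 4 + \<epsilon>) \<le> \<eta> / 2"
proof -
  have "sqrt \<epsilon> * q \<le> r * \<eta> / 8 * q" using sqrt_eps_le q_ge_1 by (intro mult_right_mono) auto
  also have "\<dots> = (r * q) * \<eta> / 8" by simp
  also have "\<dots> = (1 - r) * \<eta> / 8" unfolding r_mult_q ..
  also have "\<dots> \<le> \<eta> / 8" using r_pos eta_pos by (simp add: field_simps)
  finally have "sqrt \<epsilon> * q \<le> \<eta> / 8" .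
  moreover have "r * \<eta> / 4 \<le> \<eta> / 8" using r_le_half eta_pos by (simp add: field_simps)
  ultimately show ?thesis using eps_le_eta by linarith
qed

lemma sum_weight_if_none_roomy:
  assumes I_bal: "\<forall>p\<in>M. card (I \<inter> fst p) \<le> card (I \<inter> snd p)"
    and I_sum: "(\<Sum>p\<in>M. real (card (I \<inter> snd p))) \<le> card F2"
    and none: "\<forall>p\<in>N. \<not> roomy I p" and "N \<subseteq> M"
  shows "(\<Sum>p\<in>N. weight p) \<le> (\<Sum>p\<in>M. U_load p) + q * card F2 + (r * \<eta> / 4 + \<epsilon>) * card V"
proof -
  define bound where
    "bound p = U_load p + q * card (I \<inter> snd p) + (r * \<eta> / 4 + \<epsilon>) * card (fst p)" for p
  have "(\<Sum>p\<in>N. weight p) \<le> (\<Sum>p\<in>N. bound p)"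
    using weight_le_if_not_roomy none I_bal \<open>N \<subseteq> M\<close> unfolding bound_def by (intro sum_mono) blast
  also have "\<dots> \<le> (\<Sum>p\<in>M. bound p)"
    using q_ge_1 r_pos eta_pos eps_pos \<open>N \<subseteq> M\<close> unfolding bound_def U_load_def
    by (intro sum_mono2[OF finite_matching] add_nonneg_nonneg mult_nonneg_nonneg) auto
  also have "\<dots> = (\<Sum>p\<in>M. U_load p) + q * (\<Sum>p\<in>M. real (card (I \<inter> snd p)))
      + (r * \<eta> / 4 + \<epsilon>) * (\<Sum>p\<in>M. real (card (fst p)))"
    unfolding bound_def by (simp add: sum.distrib sum_distrib_left)
  also have "\<dots> \<le> (\<Sum>p\<in>M. U_load p) + q * card F2 + (r * \<eta> / 4 + \<epsilon>) * card V"
    using I_sum sum_card_fst_le q_ge_1 r_pos eta_pos eps_pos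
    by (intro add_mono mult_left_mono) auto
  finally show ?thesis .
qed

text \<open>The key averaging step: the matching edges atypical to some anchor carry at most
  \<open>2 \<surd>\<epsilon> q n\<close> of the average degree of \<open>A\<close>, so if no other edge were roomy, the degree
  condition would fail.\<close>
lemma exists_roomy_edge:
  assumes Z: "Z \<subseteq> R" "finite Z" "card Z \<le> 2"
    and I_bal: "\<forall>p\<in>M. card (I \<inter> fst p) \<le> card (I \<inter> snd p)"
    and I_sum: "(\<Sum>p\<in>M. real (card (I \<inter> snd p))) \<le> card F2"
  shows "\<exists>p\<in>M. (\<forall>z\<in>Z. typical E \<epsilon> A (fst p) (\<psi> z)) \<and> roomy I p"
proof (rule ccontr)
  assume none: "\<not> ?thesis"
  define T where "T = {p. p \<in> M \<and> (\<exists>z\<in>Z. \<not> typical E \<epsilon> A (fst p) (\<psi> z))}"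
  have "T \<subseteq> M" unfolding T_def by auto
  have "\<forall>p\<in>M - T. \<not> roomy I p" using none unfolding T_def by blast
  then have "(\<Sum>p\<in>M - T. weight p) \<le> (\<Sum>p\<in>M. U_load p) + q * card F2 + (r * \<eta> / 4 + \<epsilon>) * card V"
    using sum_weight_if_none_roomy[OF I_bal I_sum] by blast
  moreover have "(\<Sum>p\<in>M. weight p) = (\<Sum>p\<in>T. weight p) + (\<Sum>p\<in>M - T. weight p)"
    using sum.subset_diff[OF \<open>T \<subseteq> M\<close> finite_matching] by (simp add: add.commute)
  ultimately have "\<eta> * card V \<le> 2 * sqrt \<epsilon> * q * card V + (r * \<eta> / 4 + \<epsilon>) * card V"
    using avg_deg_large sum_weight_atypical[OF Z]
    unfolding avg_deg_eq_sum_weight sum_U_load T_def by linarith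
  also have "\<dots> = (2 * sqrt \<epsilon> * q + (r * \<eta> / 4 + \<epsilon>)) * card V"
    by (simp add: algebra_simps)
  also have "\<dots> \<le> \<eta> / 2 * card V"
    using error_terms_le by (rule mult_right_mono) simp
  finally show False using eta_pos card_V_pos by simp
qed

end

locale component_embedding = tree_embedding_setting +
  fixes K :: "'b set" and I :: "'a set" and p :: "'a set \<times> 'a set"
  assumes component: "K \<in> components EF (VF - R)" and p_in_M: "p \<in> M"
    and anchors_typical: "\<forall>z\<in>anchors K. typical E \<epsilon> A (fst p) (\<psi> z)"
    and roomy: "roomy I p"
begin

abbreviation C :: "'a set" where "C \<equiv> fst p"
abbreviation D :: "'a set" where "D \<equiv> snd p"
abbreviation \<delta> :: real where "\<delta> \<equiv> d - \<epsilon>"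

text \<open>The vertices still available as images of \<open>F1\<close>- and \<open>F2\<close>-vertices of \<open>K\<close>, and as
  images of the neighbours of an anchor \<open>z\<close>.\<close>
definition free_C :: "'a set" where "free_C = C - (U \<union> I)"
definition free_D :: "'a set" where "free_D = {x \<in> D - (U \<union> I). ultratypical E \<epsilon> clusters x}"
definition anchor_nbhd :: "'b \<Rightarrow> 'a set" where "anchor_nbhd z = {x \<in> free_C. E (\<psi> z) x}"

definition low_C :: "'a set" where
  "low_C = {v \<in> C. real (card {u \<in> free_D. E v u}) < \<delta> * card free_D}"
definition low_D :: "'a set \<Rightarrow> 'a set" where
  "low_D Y = {v \<in> D. real (card {u \<in> Y. E v u}) < \<delta> * card Y}"

text \<open>Admissible images: besides the anchor adjacencies, an image must have many
  neighbours in every candidate set its own tree neighbours may still need.\<close>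
definition admissible :: "'b \<Rightarrow> 'a \<Rightarrow> bool" where
  "admissible w v \<longleftrightarrow> v \<notin> U \<union> I \<and>
    (if w \<in> F1 then v \<in> C - low_C \<and> (\<forall>z\<in>anchors K. EF z w \<longrightarrow> E (\<psi> z) v)
     else v \<in> free_D - low_D free_C \<and> (\<forall>z\<in>anchors K. v \<notin> low_D (anchor_nbhd z)))"

lemma C_SC: "C \<in> SC" and D_LC: "D \<in> LC"
  using matching_edge p_in_M by blast+

lemma finite_C: "finite C" and finite_D: "finite D"
  using C_SC D_LC finite_cluster by blast+

lemma card_C_pos: "card C > 0" and card_D_pos: "card D > 0"
  using C_SC D_LC card_cluster_pos by blast+

lemma delta_pos: "\<delta> > 0"
  using eps_pos eps_le_half_d by linarith

lemma card_free_C: "r * \<eta> / 4 * card C \<le> card free_C"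
proof -
  have "density E A C \<le> 1" using density_le_1[OF finite_cluster[OF A_cluster] finite_C] .
  then have "(density E A C - \<epsilon>) * card C \<le> card C"
    using mult_right_mono[of "density E A C - \<epsilon>" 1 "real (card C)"] eps_pos by simp
  then show ?thesis
    using roomy card_Diff_Un_lower_bound[OF finite_C subset_refl, of U I]
    unfolding roomy_def free_C_def by linarith
qed

lemma card_anchor_nbhd:
  assumes "z \<in> anchors K"
  shows "r * \<eta> / 4 * card C \<le> card (anchor_nbhd z)"
proof -
  have "(density E A C - \<epsilon>) * card C \<le> card {x\<in>C. E (\<psi> z) x}"
    using anchors_typical assms unfolding typical_def by blast
  moreover have "anchor_nbhd z = {x\<in>C. E (\<psi> z) x} - (U \<union> I)"
    unfolding anchor_nbhd_def free_C_def by auto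
  ultimately show ?thesis
    using roomy card_Diff_Un_lower_bound[OF finite_C, of "{x\<in>C. E (\<psi> z) x}" U I]
    unfolding roomy_def by auto
qed

lemma card_free_D: "r * \<eta> / 8 * card D \<le> card free_D"
proof -
  have "free_D = (D - (U \<union> I)) - {x\<in>D. \<not> ultratypical E \<epsilon> clusters x}"
    unfolding free_D_def by auto
  moreover have "real (card {x\<in>D. \<not> ultratypical E \<epsilon> clusters x}) \<le> r * \<eta> / 8 * card D"
    using card_not_ultratypical[OF D_LC] mult_right_mono[OF sqrt_eps_le, of "real (card D)"] by linarith
  ultimately have "real (card (D - (U \<union> I))) - r * \<eta> / 8 * card D \<le> card free_D"
    using card_Diff_lower_bound[OF _ _ , of "D - (U \<union> I)" "{x\<in>D. \<not> ultratypical E \<epsilon> clusters x}"]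
      finite_D by simp
  then show ?thesis
    using roomy card_Diff_Un_lower_bound[OF finite_D subset_refl, of U I]
    unfolding roomy_def by linarith
qed

lemma card_low_D:
  assumes "Y \<subseteq> C" "r * \<eta> / 8 * card C \<le> card Y"
  shows "real (card (low_D Y)) \<le> \<epsilon> * card D"
proof -
  have "\<epsilon> * card C \<le> card Y"
    using assms(2) mult_right_mono[OF eps_le_r_eta, of "real (card C)"] by linarith
  moreover have "card Y > 0"
  proof -
    have "0 < r * \<eta> / 8 * card C" using card_C_pos r_pos eta_pos by simp
    then show ?thesis using assms(2) by linarith
  qed
  ultimately show ?thesis
    using regular_pair_few_low_degree[OF _ finite_D finite_C _ assms(1)] matching_regular[OF p_in_M]
      matching_dense[OF p_in_M] card_D_pos eps_pos
    unfolding low_D_def by fastforce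
qed

lemma card_low_C: "real (card low_C) \<le> \<epsilon> * card C"
proof -
  have "free_D \<subseteq> D" unfolding free_D_def by auto
  moreover have "\<epsilon> * card D \<le> card free_D"
    using card_free_D mult_right_mono[OF eps_le_r_eta, of "real (card D)"] by linarith
  moreover have "card free_D > 0"
  proof -
    have "0 < r * \<eta> / 8 * card D" using card_D_pos r_pos eta_pos by simp
    then show ?thesis using card_free_D by linarith
  qed
  ultimately show ?thesis
    using regular_pair_few_low_degree[OF _ finite_C finite_D _ \<open>free_D \<subseteq> D\<close>] matching_regular[OF p_in_M]
      matching_dense[OF p_in_M] card_C_pos eps_pos
    unfolding low_C_def by fastforce
qed

lemma card_component_le_room:
  assumes "X \<in> clusters"
  shows "real (card K) \<le> \<delta> * (r * \<eta> / 8 * card X) - 3 * \<epsilon> * card X"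
proof -
  have "min d 1 * r * \<eta> / 32 \<le> \<delta> * (r * \<eta> / 8) - 3 * \<epsilon>"
  proof -
    have "(d / 2) * (r * \<eta> / 8) \<le> \<delta> * (r * \<eta> / 8)"
      using eps_le_half_d r_pos eta_pos by (intro mult_right_mono) auto
    moreover have "min d 1 * r * \<eta> \<le> d * r * \<eta>" using r_pos eta_pos by (simp add: mult_right_mono)
    ultimately show ?thesis using eps_le_d by (simp add: field_simps)
  qed
  then have "min d 1 * r * \<eta> / 32 * card X \<le> (\<delta> * (r * \<eta> / 8) - 3 * \<epsilon>) * card X"
    by (rule mult_right_mono) simp
  then show ?thesis
    using card_component_le_cluster[OF component assms] by (simp add: algebra_simps)
qed

lemma admissible_image:
  assumes "admissible w v"
  shows "v \<notin> U \<union> I" "w \<in> F1 \<Longrightarrow> v \<in> C"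
    "w \<notin> F1 \<Longrightarrow> v \<in> D \<and> ultratypical E \<epsilon> clusters v"
  using assms unfolding admissible_def free_D_def by (auto split: if_splits)

lemma admissible_anchor_edge:
  assumes "z \<in> anchors K" "EF z y" "admissible y v"
  shows "E (\<psi> z) v"
  using assms anchor_neighbour_in_F1 anchors_subset[OF component] unfolding admissible_def by auto

lemma finite_candidates: "finite {v. admissible w v \<and> E u v}"
proof (rule finite_subset[OF _ finite_UnI[OF finite_C finite_D]])
  show "{v. admissible w v \<and> E u v} \<subseteq> C \<union> D"
    using admissible_image by (cases "w \<in> F1") auto
qed

text \<open>Extending from an \<open>F1\<close>-vertex mapped to \<open>u\<close> into \<open>D\<close>: \<open>u\<close> has \<open>\<delta> |free_D|\<close>
  neighbours there, of which at most \<open>3\<epsilon> |D|\<close> are of low degree into one of the at most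
  three candidate sets in \<open>C\<close>.\<close>
lemma many_candidates_in_D:
  assumes "w \<notin> F1" "u \<in> C - low_C"
  shows "card K \<le> card {v. admissible w v \<and> E u v}"
proof -
  define B where "B = low_D free_C \<union> (\<Union>z\<in>anchors K. low_D (anchor_nbhd z))"
  have big_C: "r * \<eta> / 8 * card C \<le> r * \<eta> / 4 * card C" using r_pos eta_pos by simp
  have "finite B" unfolding B_def low_D_def using finite_D finite_anchors[OF component] by auto
  have "card B \<le> card (low_D free_C) + (\<Sum>z\<in>anchors K. card (low_D (anchor_nbhd z)))"
    unfolding B_def
    using card_Un_le[of "low_D free_C" "\<Union>z\<in>anchors K. low_D (anchor_nbhd z)"] card_UN_le[OF finite_anchors[OF component], of "\<lambda>z. low_D (anchor_nbhd z)"]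
    by linarith
  then have "real (card B) \<le> card (low_D free_C) + (\<Sum>z\<in>anchors K. real (card (low_D (anchor_nbhd z))))"
    by (simp only: of_nat_add[symmetric] of_nat_sum[symmetric] of_nat_le_iff)
  also have "\<dots> \<le> \<epsilon> * card D + (\<Sum>z\<in>anchors K. \<epsilon> * card D)"
  proof (intro add_mono sum_mono)
    show "real (card (low_D free_C)) \<le> \<epsilon> * card D"
      by (rule card_low_D) (use card_free_C big_C in \<open>auto simp: free_C_def\<close>)
    show "real (card (low_D (anchor_nbhd z))) \<le> \<epsilon> * card D" if "z \<in> anchors K" for z
      by (rule card_low_D) (use card_anchor_nbhd[OF that] big_C in \<open>auto simp: anchor_nbhd_def free_C_def\<close>)
  qed
  also have "\<dots> \<le> 3 * \<epsilon> * card D"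
    using card_anchors(2)[OF component] eps_pos mult_right_mono[of "real (card (anchors K))" 2 "\<epsilon> * card D"]
    by simp
  finally have card_B: "real (card B) \<le> 3 * \<epsilon> * card D" .
  have "\<delta> * (r * \<eta> / 8 * card D) \<le> \<delta> * card free_D"
    using card_free_D delta_pos by (intro mult_left_mono) auto
  also have "\<dots> \<le> card {x\<in>free_D. E u x}" using assms(2) unfolding low_C_def by auto
  finally have "\<delta> * (r * \<eta> / 8 * card D) - 3 * \<epsilon> * card D \<le> card ({x\<in>free_D. E u x} - B)"
    using card_Diff_lower_bound[OF _ \<open>finite B\<close> card_B, of "{x\<in>free_D. E u x}"] finite_D
    unfolding free_D_def by auto
  also have "\<dots> \<le> card {v. admissible w v \<and> E u v}"
  proof -
    have "{x\<in>free_D. E u x} - B \<subseteq> {v. admissible w v \<and> E u v}"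
      using assms(1) unfolding admissible_def B_def free_D_def by auto
    then show ?thesis using card_mono[OF finite_candidates] by simp
  qed
  finally show ?thesis using card_component_le_room[OF D_LC[THEN UnI1]] by linarith
qed

text \<open>Extending from an \<open>F2\<close>-vertex mapped to \<open>u\<close> into \<open>C\<close>, inside a candidate set
  \<open>Y\<close> that already respects the anchor adjacencies of \<open>w\<close>.\<close>
lemma many_candidates_in_C:
  assumes "w \<in> F1" "u \<in> D" "u \<notin> low_D Y" "Y \<subseteq> free_C" "r * \<eta> / 4 * card C \<le> card Y"
    and anchors_ok: "\<forall>x\<in>Y. \<forall>z\<in>anchors K. EF z w \<longrightarrow> E (\<psi> z) x"
  shows "card K \<le> card {v. admissible w v \<and> E u v}"
proof -
  have "\<delta> * (r * \<eta> / 8 * card C) \<le> \<delta> * card Y"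
    using assms(5) delta_pos r_pos eta_pos by (intro mult_left_mono) auto
  also have "\<dots> \<le> card {x\<in>Y. E u x}" using assms(2,3) unfolding low_D_def by auto
  moreover have "finite {x\<in>Y. E u x}" "finite low_C"
    using assms(4) finite_C unfolding free_C_def low_C_def by (auto intro: finite_subset)
  ultimately have "\<delta> * (r * \<eta> / 8 * card C) - \<epsilon> * card C \<le> card ({x\<in>Y. E u x} - low_C)"
    using card_Diff_lower_bound[OF _ _ card_low_C] by fastforce
  also have "\<dots> \<le> card {v. admissible w v \<and> E u v}"
  proof -
    have "{x\<in>Y. E u x} - low_C \<subseteq> {v. admissible w v \<and> E u v}"
      using assms(1,4) anchors_ok unfolding admissible_def free_C_def by auto
    then show ?thesis using card_mono[OF finite_candidates] by simp
  qed
  finally show ?thesis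
    using card_component_le_room[OF C_SC[THEN UnI2]] eps_pos
      mult_nonneg_nonneg[of \<epsilon> "real (card C)"] by linarith
qed

lemma admissible_extends:
  assumes "w' \<in> K" "w \<in> K" "EF w' w" "admissible w' u"
  shows "card K \<le> card {v. admissible w v \<and> E u v}"
proof (cases "w' \<in> F1")
  case True
  then have "w \<notin> F1" using edge_colours[OF assms(3)] F1_Int_F2 by blast
  then show ?thesis using many_candidates_in_D True assms(4) unfolding admissible_def by auto
next
  case False
  then have "w \<in> F1" using edge_colours[OF assms(3)] assms(1) component_subset[OF component] F1_Un_F2
    by blast
  have u: "u \<in> D" "u \<notin> low_D free_C" "\<forall>z\<in>anchors K. u \<notin> low_D (anchor_nbhd z)"
    using False assms(4) unfolding admissible_def free_D_def by auto
  show ?thesis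
  proof (cases "\<exists>z\<in>anchors K. EF z w")
    case True
    then obtain z where z: "z \<in> anchors K" "EF z w" by blast
    have "E (\<psi> z') x" if "x \<in> anchor_nbhd z" "z' \<in> anchors K" "EF z' w" for x z'
      using that z anchor_unique anchors_subset[OF component] unfolding anchor_nbhd_def by blast
    then show ?thesis
      using many_candidates_in_C[OF \<open>w \<in> F1\<close> u(1)] u(3) z(1) card_anchor_nbhd[OF z(1)]
      unfolding anchor_nbhd_def by auto
  next
    case False
    then show ?thesis
      using many_candidates_in_C[OF \<open>w \<in> F1\<close> u(1,2)] card_free_C by auto
  qed
qed

lemma admissible_root:
  assumes "a \<in> K" "z \<in> anchors K" "EF z a"
  shows "\<exists>v. admissible a v"
proof -
  have "\<epsilon> * card C < r * \<eta> / 4 * card C"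
    using eps_le_r_eta eps_pos card_C_pos by (intro mult_strict_right_mono) auto
  then have "real (card low_C) < card (anchor_nbhd z)"
    using card_low_C card_anchor_nbhd[OF assms(2)] by linarith
  have "\<not> anchor_nbhd z \<subseteq> low_C"
  proof
    assume "anchor_nbhd z \<subseteq> low_C"
    moreover have "finite low_C" using finite_C unfolding low_C_def by simp
    ultimately have "card (anchor_nbhd z) \<le> card low_C" using card_mono by blast
    then show False using \<open>real (card low_C) < card (anchor_nbhd z)\<close> by simp
  qed
  then obtain v where v: "v \<in> anchor_nbhd z" "v \<notin> low_C" by blast
  have "a \<in> F1" using anchor_neighbour_in_F1 assms(2,3) anchors_subset[OF component] by blast
  moreover have "E (\<psi> z') v" if "z' \<in> anchors K" "EF z' a" for z'
    using that assms v(1) anchor_unique anchors_subset[OF component] unfolding anchor_nbhd_def by blast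
  ultimately have "admissible a v"
    using v unfolding admissible_def anchor_nbhd_def free_C_def by auto
  then show ?thesis by blast
qed

lemma embed_component:
  "\<exists>\<phi>K. inj_on \<phi>K K \<and> (\<forall>w\<in>K. admissible w (\<phi>K w))
     \<and> (\<forall>x\<in>K. \<forall>y\<in>K. EF x y \<longrightarrow> E (\<phi>K x) (\<phi>K y))"
proof -
  have "anchors K \<noteq> {}" using card_anchors(1)[OF component] by auto
  then obtain z a where "z \<in> anchors K" "a \<in> K" "EF z a" unfolding anchors_def by blast
  then obtain v0 where "admissible a v0" using admissible_root by blast
  moreover have "\<forall>v\<in>K. (induced EF K)\<^sup>*\<^sup>* a v"
    using components_connected[OF symp_EF component \<open>a \<in> K\<close>] by blast
  ultimately show ?thesis
    using greedy_tree_embedding[where Good = admissible, OF finite_component[OF component] \<open>a \<in> K\<close> _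
        acyclic symp_EF irrefl_EF symp_E] admissible_extends
    by blast
qed

end

context tree_embedding_setting
begin

definition partial_embedding :: "'b set \<Rightarrow> ('b \<Rightarrow> 'a) \<Rightarrow> bool" where
  "partial_embedding S \<phi> \<longleftrightarrow> R \<subseteq> S \<and> S \<subseteq> VF \<and> (\<forall>v\<in>R. \<phi> v = \<psi> v) \<and> inj_on \<phi> S \<and> \<phi> ` S \<subseteq> V
    \<and> (\<forall>u\<in>S. \<forall>v\<in>S. EF u v \<longrightarrow> E (\<phi> u) (\<phi> v)) \<and> \<phi> ` (S - R) \<inter> U = {}
    \<and> \<phi> ` (F1 \<inter> S) \<subseteq> \<Union>(fst ` M) \<and> \<phi> ` (F2 \<inter> S - R) \<subseteq> \<Union>(snd ` M)
    \<and> (\<forall>v\<in>F2 \<inter> S. ultratypical E \<epsilon> clusters (\<phi> v))"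

lemma partial_embeddingD:
  assumes "partial_embedding S \<phi>"
  shows "R \<subseteq> S" "S \<subseteq> VF" "\<forall>v\<in>R. \<phi> v = \<psi> v" "inj_on \<phi> S" "\<phi> ` S \<subseteq> V"
    "\<forall>u\<in>S. \<forall>v\<in>S. EF u v \<longrightarrow> E (\<phi> u) (\<phi> v)" "\<phi> ` (S - R) \<inter> U = {}"
    "\<phi> ` (F1 \<inter> S) \<subseteq> \<Union>(fst ` M)" "\<phi> ` (F2 \<inter> S - R) \<subseteq> \<Union>(snd ` M)"
    "\<forall>v\<in>F2 \<inter> S. ultratypical E \<epsilon> clusters (\<phi> v)"
  using assms unfolding partial_embedding_def by simp_all

definition room_left :: "'b set \<Rightarrow> ('b \<Rightarrow> 'a) \<Rightarrow> bool" where
  "room_left S \<phi> \<longleftrightarrow> (\<forall>p\<in>M. card (\<phi> ` S \<inter> fst p) \<le> card (\<phi> ` S \<inter> snd p))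
    \<and> (\<forall>p\<in>M. (\<exists>v\<in>S - R. \<phi> v \<in> fst p \<union> snd p) \<longrightarrow>
         r * \<eta> * card (fst p) / 8 \<le> card (fst p - (U \<union> \<phi> ` S))
       \<and> r * \<eta> * card (snd p) / 8 \<le> card (snd p - (U \<union> \<phi> ` S)))"

lemma finite_F2: "finite F2"
  using F1_Un_F2 finite_VF by (metis finite_Un)

text \<open>Only \<open>F2\<close>-vertices are mapped into L-clusters of the matching.\<close>
lemma sum_card_image_snd_le:
  assumes "partial_embedding S \<phi>"
  shows "(\<Sum>p\<in>M. real (card (\<phi> ` S \<inter> snd p))) \<le> card F2"
proof -
  have "S \<subseteq> VF" "\<phi> ` (F1 \<inter> S) \<subseteq> \<Union>(fst ` M)"
    using partial_embeddingD[OF assms] by simp_all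
  have sum_eq: "card (\<Union>p\<in>M. \<phi> ` S \<inter> snd p) = (\<Sum>p\<in>M. card (\<phi> ` S \<inter> snd p))"
  proof (rule card_UN_disjoint[OF finite_matching])
    show "\<forall>p\<in>M. finite (\<phi> ` S \<inter> snd p)" using matching_edge finite_cluster by blast
    show "\<forall>p\<in>M. \<forall>p'\<in>M. p \<noteq> p' \<longrightarrow> \<phi> ` S \<inter> snd p \<inter> (\<phi> ` S \<inter> snd p') = {}"
      using matching_snd_disjoint by blast
  qed
  have "(\<Union>p\<in>M. \<phi> ` S \<inter> snd p) \<subseteq> \<phi> ` (F2 \<inter> S)"
  proof
    fix x assume "x \<in> (\<Union>p\<in>M. \<phi> ` S \<inter> snd p)"
    then obtain p v where p: "p \<in> M" "v \<in> S" "x = \<phi> v" "x \<in> snd p" by auto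
    have "v \<notin> F1"
    proof
      assume "v \<in> F1"
      then obtain p' where "p' \<in> M" "x \<in> fst p'"
        using \<open>\<phi> ` (F1 \<inter> S) \<subseteq> \<Union>(fst ` M)\<close> p by auto
      then show False using matching_fst_snd_disjoint[OF \<open>p' \<in> M\<close> p(1)] p(4) by blast
    qed
    then show "x \<in> \<phi> ` (F2 \<inter> S)" using p \<open>S \<subseteq> VF\<close> F1_Un_F2 by auto
  qed
  then have "card (\<Union>p\<in>M. \<phi> ` S \<inter> snd p) \<le> card (\<phi> ` (F2 \<inter> S))"
    using finite_F2 by (intro card_mono) auto
  also have "\<dots> \<le> card (F2 \<inter> S)" using finite_F2 by (intro card_image_le) auto
  also have "\<dots> \<le> card F2" using finite_F2 by (intro card_mono) auto
  finally show ?thesis unfolding sum_eq by (simp only: of_nat_sum[symmetric] of_nat_le_iff)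
qed

lemma partial_embedding_anchors: "partial_embedding R \<psi>"
proof -
  have "\<not> EF u v" if "u \<in> R" "v \<in> R" for u v
    using that edge_colours R_F2 F1_Int_F2 by blast
  then show ?thesis
    unfolding partial_embedding_def
    using R_subset \<psi>_inj \<psi>_image cluster_subset[OF A_cluster] R_F2 F1_Int_F2 by auto
qed

lemma room_left_anchors: "room_left R \<psi>"
proof -
  have "\<psi> ` R \<inter> fst p = {}" if "p \<in> M" for p
  proof -
    have "fst p \<in> SC" using matching_edge that by blast
    then have "A \<inter> fst p = {}" using A_in_LC LC_SC_disjoint clusters_disjoint by blast
    then show ?thesis using \<psi>_image by auto
  qed
  then show ?thesis unfolding room_left_def by simp
qed

end

context component_embedding
begin

context
  fixes S :: "'b set" and \<phi> \<phi>K :: "'b \<Rightarrow> 'a"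
  assumes partial: "partial_embedding S \<phi>" and room: "room_left S \<phi>" and I_eq: "I = \<phi> ` S"
    and disjoint: "K \<inter> S = {}" and boundary: "\<forall>u\<in>S. \<forall>v\<in>K. EF u v \<longrightarrow> u \<in> R"
    and \<phi>K_inj: "inj_on \<phi>K K" and \<phi>K_admissible: "\<forall>w\<in>K. admissible w (\<phi>K w)"
    and \<phi>K_edges: "\<forall>x\<in>K. \<forall>y\<in>K. EF x y \<longrightarrow> E (\<phi>K x) (\<phi>K y)"
begin

abbreviation \<phi>' :: "'b \<Rightarrow> 'a" where "\<phi>' \<equiv> override_on \<phi> \<phi>K K"

lemma \<phi>'_S: "v \<in> S \<Longrightarrow> \<phi>' v = \<phi> v"
  using disjoint by (auto simp: override_on_def)

lemma image_\<phi>': "\<phi>' ` (S \<union> K) = I \<union> \<phi>K ` K"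
  unfolding I_eq image_Un using \<phi>'_S by (auto simp: image_iff)

lemma image_\<phi>'_subset: "\<phi>' ` (X \<inter> (S \<union> K)) \<subseteq> \<phi> ` (X \<inter> S) \<union> \<phi>K ` (K \<inter> X)"
  using \<phi>'_S by auto

lemma image_\<phi>K: "\<phi>K ` K \<subseteq> C \<union> D" "\<phi>K ` K \<inter> (U \<union> I) = {}"
  using \<phi>K_admissible admissible_image by (fastforce, blast)

lemma image_\<phi>K_F1: "\<phi>K ` (K \<inter> F1) \<subseteq> C" and image_\<phi>K_F2: "\<phi>K ` (K \<inter> F2) \<subseteq> D"
  using \<phi>K_admissible admissible_image F1_Int_F2 by blast+

lemma image_\<phi>K_other:
  assumes "p' \<in> M" "p' \<noteq> p"
  shows "\<phi>K ` K \<inter> fst p' = {}" "\<phi>K ` K \<inter> snd p' = {}"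
  using image_\<phi>K(1) matching_fst_disjoint[OF p_in_M assms(1)] matching_snd_disjoint[OF p_in_M assms(1)]
    matching_fst_snd_disjoint[OF p_in_M assms(1)] matching_fst_snd_disjoint[OF assms(1) p_in_M] assms(2)
  by blast+

lemma inj_on_extended: "inj_on \<phi>' (S \<union> K)"
proof -
  have "inj_on \<phi>' S"
    using partial_embeddingD(4)[OF partial] inj_on_cong[of S \<phi>' \<phi>] \<phi>'_S by simp
  moreover have "inj_on \<phi>' K" using \<phi>K_inj inj_on_cong[of K \<phi>' \<phi>K] by simp
  moreover have "\<phi>' ` (S - K) \<inter> \<phi>' ` (K - S) = {}"
    using image_\<phi>K(2) \<phi>'_S unfolding I_eq by auto
  ultimately show ?thesis by (simp add: inj_on_Un)
qed

text \<open>Edges between \<open>S\<close> and \<open>K\<close> start at anchors, whose adjacencies were built into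
  the admissible images.\<close>
lemma edges_extended:
  assumes uv: "u \<in> S \<union> K" "v \<in> S \<union> K" "EF u v"
  shows "E (\<phi>' u) (\<phi>' v)"
proof -
  note pe = partial_embeddingD[OF partial]
  have vu: "EF v u" using uv(3) symp_EF by (blast dest: sympD)
  consider "u \<in> K" "v \<in> K" | "u \<in> K" "v \<in> S" | "u \<in> S" "v \<in> K" | "u \<in> S" "v \<in> S"
    using uv by blast
  then show ?thesis
  proof cases
    case 1 then show ?thesis using \<phi>K_edges uv(3) by simp
  next
    case 2
    then have "v \<in> anchors K" using boundary vu unfolding anchors_def by blast
    then have "E (\<psi> v) (\<phi>K u)" using admissible_anchor_edge vu 2 \<phi>K_admissible by blast
    moreover have "\<phi> v = \<psi> v" using pe(3) \<open>v \<in> anchors K\<close> anchors_subset[OF component] by blast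
    ultimately show ?thesis using 2 \<phi>'_S symp_E by (auto dest: sympD)
  next
    case 3
    then have "u \<in> anchors K" using boundary uv(3) unfolding anchors_def by blast
    then show ?thesis using admissible_anchor_edge uv(3) 3 \<phi>K_admissible pe(3)
        anchors_subset[OF component] \<phi>'_S by auto
  next
    case 4 then show ?thesis using pe(6) uv(3) \<phi>'_S by simp
  qed
qed

lemma partial_embedding_extended: "partial_embedding (S \<union> K) \<phi>'"
proof -
  note pe = partial_embeddingD[OF partial]
  have "\<phi>' ` (S \<union> K) \<subseteq> V"
    using pe(5) image_\<phi>K(1) cluster_subset C_SC D_LC unfolding image_\<phi>' I_eq by blast
  moreover have "\<phi>' ` (S \<union> K - R) \<inter> U = {}"
  proof -
    have "\<phi>' ` (S \<union> K - R) \<subseteq> \<phi> ` (S - R) \<union> \<phi>K ` K" using \<phi>'_S by auto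
    then show ?thesis using pe(7) image_\<phi>K(2) by blast
  qed
  moreover have "\<phi>' ` (F1 \<inter> (S \<union> K)) \<subseteq> \<Union>(fst ` M)"
  proof -
    have "C \<subseteq> \<Union>(fst ` M)" using p_in_M by blast
    then show ?thesis
      by (rule subset_trans[OF image_\<phi>'_subset[of F1] Un_least[OF pe(8) subset_trans[OF image_\<phi>K_F1]]])
  qed
  moreover have "\<phi>' ` (F2 \<inter> (S \<union> K) - R) \<subseteq> \<Union>(snd ` M)"
  proof -
    have "D \<subseteq> \<Union>(snd ` M)" using p_in_M by blast
    have "\<phi>' ` (F2 \<inter> (S \<union> K) - R) \<subseteq> \<phi>' ` ((F2 - R) \<inter> (S \<union> K))" by auto
    also have "\<dots> \<subseteq> \<phi> ` (F2 \<inter> S - R) \<union> \<phi>K ` (K \<inter> F2)"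
      using image_\<phi>'_subset[of "F2 - R"] by auto
    also have "\<dots> \<subseteq> \<Union>(snd ` M)"
      using Un_least[OF pe(9) subset_trans[OF image_\<phi>K_F2 \<open>D \<subseteq> \<Union>(snd ` M)\<close>]] .
    finally show ?thesis .
  qed
  moreover have "\<forall>v\<in>F2 \<inter> (S \<union> K). ultratypical E \<epsilon> clusters (\<phi>' v)"
    using pe(10) \<phi>K_admissible admissible_image F1_Int_F2 \<phi>'_S by fastforce
  ultimately show ?thesis
    unfolding partial_embedding_def
    using pe(1-3) component_subset[OF component] inj_on_extended edges_extended \<phi>'_S by auto
qed

lemma card_image_\<phi>K_Int_C: "card ((I \<union> \<phi>K ` K) \<inter> C) \<le> card (I \<inter> C) + card (F1 \<inter> K)"
proof -
  have "(I \<union> \<phi>K ` K) \<inter> C \<subseteq> (I \<inter> C) \<union> \<phi>K ` (K \<inter> F1)"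
  proof
    fix x assume x: "x \<in> (I \<union> \<phi>K ` K) \<inter> C"
    show "x \<in> (I \<inter> C) \<union> \<phi>K ` (K \<inter> F1)"
    proof (cases "x \<in> I")
      case False
      then obtain w where w: "w \<in> K" "x = \<phi>K w" using x by auto
      have "w \<notin> F2" using image_\<phi>K_F2 w x matching_fst_snd_disjoint[OF p_in_M p_in_M] by blast
      then show ?thesis using w component_subset[OF component] F1_Un_F2 by blast
    qed (use x in blast)
  qed
  then have "card ((I \<union> \<phi>K ` K) \<inter> C) \<le> card ((I \<inter> C) \<union> \<phi>K ` (K \<inter> F1))"
    by (rule card_mono[rotated]) (use finite_C finite_component[OF component] in simp)
  also have "\<dots> \<le> card (I \<inter> C) + card (\<phi>K ` (K \<inter> F1))" by (rule card_Un_le)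
  also have "card (\<phi>K ` (K \<inter> F1)) \<le> card (F1 \<inter> K)"
    using card_image_le finite_component[OF component] by (metis Int_commute finite_Int)
  finally show ?thesis by simp
qed

lemma card_image_\<phi>K_Int_D: "card (I \<inter> D) + card (F2 \<inter> K) \<le> card ((I \<union> \<phi>K ` K) \<inter> D)"
proof -
  have "card ((I \<inter> D) \<union> \<phi>K ` (K \<inter> F2)) = card (I \<inter> D) + card (\<phi>K ` (K \<inter> F2))"
    by (rule card_Un_disjoint) (use finite_D finite_component[OF component] image_\<phi>K(2) in auto)
  also have "card (\<phi>K ` (K \<inter> F2)) = card (F2 \<inter> K)"
    using card_image inj_on_subset[OF \<phi>K_inj] by (metis Int_commute Int_lower1)
  finally have "card ((I \<inter> D) \<union> \<phi>K ` (K \<inter> F2)) = card (I \<inter> D) + card (F2 \<inter> K)" .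
  moreover have "card ((I \<inter> D) \<union> \<phi>K ` (K \<inter> F2)) \<le> card ((I \<union> \<phi>K ` K) \<inter> D)"
    using image_\<phi>K_F2 finite_D by (intro card_mono) auto
  ultimately show ?thesis by simp
qed

lemma card_remaining_after_component:
  assumes "X \<in> clusters" "r * \<eta> / 4 * card X \<le> card (X - (U \<union> I))"
  shows "r * \<eta> * card X / 8 \<le> card (X - (U \<union> (I \<union> \<phi>K ` K)))"
proof -
  have "real (card K) \<le> r * \<eta> / 32 * card X"
  proof -
    have "real (card K) \<le> min d 1 * r * \<eta> / 32 * card X"
      by (rule card_component_le_cluster[OF component assms(1)])
    also have "\<dots> \<le> r * \<eta> / 32 * card X"
      using r_pos eta_pos by (intro mult_right_mono) (auto simp: min_def)
    finally show ?thesis .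
  qed
  moreover have "real (card (\<phi>K ` K)) \<le> card K"
    using card_image_le[OF finite_component[OF component]] by simp
  moreover have "X - (U \<union> (I \<union> \<phi>K ` K)) = (X - (U \<union> I)) - \<phi>K ` K" by auto
  ultimately show ?thesis
    using card_Diff_lower_bound[of "X - (U \<union> I)" "\<phi>K ` K" "real (card K)"] assms(2)
      finite_cluster[OF assms(1)] finite_component[OF component]
    by (auto simp: algebra_simps)
qed

lemma room_left_extended: "room_left (S \<union> K) \<phi>'"
proof -
  have bal: "\<forall>p'\<in>M. card (I \<inter> fst p') \<le> card (I \<inter> snd p')"
    and old_room: "\<forall>p'\<in>M. (\<exists>v\<in>S - R. \<phi> v \<in> fst p' \<union> snd p') \<longrightarrow>
         r * \<eta> * card (fst p') / 8 \<le> card (fst p' - (U \<union> I))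
       \<and> r * \<eta> * card (snd p') / 8 \<le> card (snd p' - (U \<union> I))"
    using room unfolding room_left_def I_eq by auto
  have "card ((I \<union> \<phi>K ` K) \<inter> fst p') \<le> card ((I \<union> \<phi>K ` K) \<inter> snd p')" if p': "p' \<in> M" for p'
  proof (cases "p' = p")
    case True
    then show ?thesis
      using card_image_\<phi>K_Int_C card_image_\<phi>K_Int_D bal p_in_M balanced component by fastforce
  next
    case False
    then show ?thesis using image_\<phi>K_other[OF p'] bal p' by (simp add: Int_Un_distrib2)
  qed
  moreover have "r * \<eta> * card (fst p') / 8 \<le> card (fst p' - (U \<union> (I \<union> \<phi>K ` K)))
      \<and> r * \<eta> * card (snd p') / 8 \<le> card (snd p' - (U \<union> (I \<union> \<phi>K ` K)))"
    if p': "p' \<in> M" "\<exists>v\<in>S \<union> K - R. \<phi>' v \<in> fst p' \<union> snd p'" for p'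
  proof (cases "p' = p")
    case True
    have "r * \<eta> / 4 * card D \<le> card (D - (U \<union> I))"
      using roomy card_Diff_Un_lower_bound[OF finite_D subset_refl, of U I] unfolding roomy_def by linarith
    then show ?thesis
      using True card_remaining_after_component C_SC D_LC card_free_C unfolding free_C_def by blast
  next
    case False
    obtain v where v: "v \<in> S \<union> K - R" "\<phi>' v \<in> fst p' \<union> snd p'" using p'(2) by blast
    have "v \<notin> K" using v image_\<phi>K_other[OF p'(1) False] by auto
    then have "v \<in> S - R" "\<phi> v \<in> fst p' \<union> snd p'" using v \<phi>'_S by auto
    moreover have "fst p' - (U \<union> (I \<union> \<phi>K ` K)) = fst p' - (U \<union> I)"
      "snd p' - (U \<union> (I \<union> \<phi>K ` K)) = snd p' - (U \<union> I)"
      using image_\<phi>K_other[OF p'(1) False] by auto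
    ultimately show ?thesis using old_room p'(1) by auto
  qed
  ultimately show ?thesis unfolding room_left_def image_\<phi>' by auto
qed

end

end

context tree_embedding_setting
begin

lemma extend_partial_embedding:
  assumes partial: "partial_embedding S \<phi>" and room: "room_left S \<phi>"
    and K: "K \<in> components EF (VF - R)" and disjoint: "K \<inter> S = {}"
    and boundary: "\<forall>u\<in>S. \<forall>v\<in>K. EF u v \<longrightarrow> u \<in> R"
  shows "\<exists>\<phi>'. partial_embedding (S \<union> K) \<phi>' \<and> room_left (S \<union> K) \<phi>'"
proof -
  obtain p where p: "p \<in> M" "\<forall>z\<in>anchors K. typical E \<epsilon> A (fst p) (\<psi> z)" "roomy (\<phi> ` S) p"
    using exists_roomy_edge[OF anchors_subset[OF K] finite_anchors[OF K] card_anchors(2)[OF K]]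
      room sum_card_image_snd_le[OF partial] unfolding room_left_def by blast
  interpret component_embedding r \<epsilon> d V E LC SC k \<eta>' M VF EF R F1 F2 \<tau> \<eta> U A \<psi> K "\<phi> ` S" p
    by unfold_locales (use K p in auto)
  obtain \<phi>K where "inj_on \<phi>K K" "\<forall>w\<in>K. admissible w (\<phi>K w)" "\<forall>x\<in>K. \<forall>y\<in>K. EF x y \<longrightarrow> E (\<phi>K x) (\<phi>K y)"
    using embed_component by blast
  then show ?thesis
    using partial_embedding_extended[OF partial room refl disjoint boundary]
      room_left_extended[OF partial room refl disjoint boundary] by blast
qed

text \<open>The components of \<open>F - R\<close> are embedded one after another; each is attached to the
  part embedded so far only through its anchors.\<close>
lemma exists_full_embedding: "\<exists>\<phi>. partial_embedding VF \<phi> \<and> room_left VF \<phi>"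
proof -
  let ?C = "components EF (VF - R)"
  have "finite ?C" by (rule finite_components) (use finite_VF in simp)
  then have "\<exists>\<phi>. partial_embedding (R \<union> \<Union>?C) \<phi> \<and> room_left (R \<union> \<Union>?C) \<phi>"
    using subset_refl
  proof (induction rule: finite_subset_induct')
    case empty
    show ?case using partial_embedding_anchors room_left_anchors by auto
  next
    case (insert K F)
    then obtain \<phi> where \<phi>: "partial_embedding (R \<union> \<Union>F) \<phi>" "room_left (R \<union> \<Union>F) \<phi>" by blast
    have K: "K \<in> ?C" using insert by simp
    have other: "K \<noteq> K'" "K \<inter> K' = {}" if "K' \<in> F" for K'
      using that insert(3,4) components_disjoint[OF symp_EF K] by blast+
    have "K \<inter> (R \<union> \<Union>F) = {}"
      using other component_subset[OF K] by blast
    moreover have "u \<in> R" if uv: "u \<in> R \<union> \<Union>F" "v \<in> K" "EF u v" for u v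
    proof (rule ccontr)
      assume "u \<notin> R"
      then obtain K' where "K' \<in> F" "u \<in> K'" using uv(1) by blast
      moreover have "u \<in> K"
        using components_closed[OF symp_EF K uv(2)] uv(3) edge_in_VF \<open>u \<notin> R\<close> symp_EF
        by (blast dest: sympD)
      ultimately show False using other by blast
    qed
    ultimately obtain \<phi>' where "partial_embedding ((R \<union> \<Union>F) \<union> K) \<phi>'" "room_left ((R \<union> \<Union>F) \<union> K) \<phi>'"
      using extend_partial_embedding[OF \<phi> K] by blast
    moreover have "(R \<union> \<Union>F) \<union> K = R \<union> \<Union>(insert K F)" by auto
    ultimately show ?case by auto
  qed
  moreover have "R \<union> \<Union>?C = VF"
    using R_subset components_subset components_cover[of _ "VF - R" EF] by blast
  ultimately show ?thesis by simp
qed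

theorem tree_embedding:
  "\<exists>\<phi>. (\<forall>v \<in> R. \<phi> v = \<psi> v)
     \<and> embedding VF EF V E \<phi>
     \<and> \<phi> ` (VF - R) \<inter> U = {}
     \<and> \<phi> ` F1 \<subseteq> \<Union>(fst ` M)
     \<and> \<phi> ` (F2 - R) \<subseteq> \<Union>(snd ` M)
     \<and> (\<forall>v \<in> F2. ultratypical E \<epsilon> clusters (\<phi> v))
     \<and> (\<forall>C \<in> clusters. (\<exists>v \<in> VF - R. \<phi> v \<in> C) \<longrightarrow>
          real (card (C - (U \<union> \<phi> ` VF))) \<ge> r * \<eta> * real (card C) / 8)"
proof -
  obtain \<phi> where \<phi>: "partial_embedding VF \<phi>" "room_left VF \<phi>" using exists_full_embedding by blast
  note pe = partial_embeddingD[OF \<phi>(1)]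
  have "F1 \<inter> VF = F1" "F2 \<inter> VF = F2" using F1_Un_F2 by auto
  moreover have "r * \<eta> * real (card X) / 8 \<le> real (card (X - (U \<union> \<phi> ` VF)))"
    if X: "X \<in> clusters" and v: "v \<in> VF - R" "\<phi> v \<in> X" for X v
  proof -
    obtain p where p: "p \<in> M" "\<phi> v \<in> fst p \<union> snd p"
      using pe(8,9) v F1_Un_F2 by blast
    then have "X = fst p \<or> X = snd p" using cluster_unique[OF X] v(2) matching_edge by blast
    then show ?thesis using \<phi>(2) p v(1) unfolding room_left_def by auto
  qed
  ultimately show ?thesis
    unfolding embedding_def using pe edge_in_VF by (intro exI[of _ \<phi>]) auto
qed

end

theorem proposition6p1:
  shows "\<forall>\<eta> d :: real. \<eta> > 0 \<longrightarrow> d > 0 \<longrightarrow> (\<forall>r \<in> \<rat>. 0 < r \<longrightarrow> r \<le> 1/2 \<longrightarrow>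
    (\<exists>\<epsilon> > 0. \<forall>Nmax :: nat. \<exists>\<beta> > 0. \<forall>n :: nat.
      \<forall>(VF :: nat set) EF R F1 F2 (V :: nat set) E LC SC (k :: nat) \<eta>' U M A.
        anchored_forest VF EF R (\<beta> * real n)
        \<and> colour_classes VF EF F1 F2 \<and> R \<subseteq> F2
        \<and> (\<forall>K \<in> components EF (VF - R). card (F1 \<inter> K) \<le> card (F2 \<inter> K))
        \<and> skew_LKS r V E LC SC k \<eta>' \<epsilon> d \<and> card V = n \<and> card (LC \<union> SC) \<le> Nmax
        \<and> U \<subseteq> V \<and> LS_matching E LC SC M \<and> A \<in> LC \<union> SC
        \<and> avg_deg E A (fst ` M) \<ge> (1 - r) / r * real (card F2)
             + (\<Sum>(C, D) \<in> M. max (real (card (U \<inter> C))) ((1 - r) / r * real (card (U \<inter> D))))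
             + \<eta> * real n
        \<longrightarrow> (\<forall>\<psi>. inj_on \<psi> R \<and> \<psi> ` R \<subseteq> {x \<in> A. ultratypical E \<epsilon> (LC \<union> SC) x} \<longrightarrow>
             (\<exists>\<phi>. (\<forall>v \<in> R. \<phi> v = \<psi> v)
                 \<and> embedding VF EF V E \<phi>
                 \<and> \<phi> ` (VF - R) \<inter> U = {}
                 \<and> \<phi> ` F1 \<subseteq> \<Union>(fst ` M)
                 \<and> \<phi> ` (F2 - R) \<subseteq> \<Union>(snd ` M)
                 \<and> (\<forall>v \<in> F2. ultratypical E \<epsilon> (LC \<union> SC) (\<phi> v))
                 \<and> (\<forall>C \<in> LC \<union> SC. (\<exists>v \<in> VF - R. \<phi> v \<in> C) \<longrightarrow>
                      real (card (C - (U \<union> \<phi> ` VF))) \<ge> r * \<eta> * real (card C) / 8)))))"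
proof (intro allI impI ballI, goal_cases)
  case (1 \<eta> d r)
  then have \<eta>: "0 < \<eta>" and d: "0 < d" and r: "0 < r" "r \<le> 1/2" by simp_all
  define \<epsilon> where "\<epsilon> = min ((r * \<eta> / 8)\<^sup>2) (min (d * r * \<eta> / 96) (min (d / 2) 1))"
  have \<epsilon>: "0 < \<epsilon>" "sqrt \<epsilon> \<le> r * \<eta> / 8" "\<epsilon> \<le> d * r * \<eta> / 96" "\<epsilon> \<le> d / 2" "\<epsilon> \<le> 1"
    using \<eta> d r real_sqrt_le_mono[of \<epsilon> "(r * \<eta> / 8)\<^sup>2"] unfolding \<epsilon>_def by auto
  show ?case
  proof (rule exI[of _ \<epsilon>], intro conjI allI, goal_cases)
    case 1 show ?case by (rule \<epsilon>(1))
  next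
    case (2 Nmax)
    define c where "c = min d 1 * r * \<eta> / 32"
    have "c > 0" using \<eta> d r unfolding c_def by simp
    show ?case
    proof (rule exI[of _ "c * r / (real Nmax + 1)"], intro conjI allI impI, goal_cases)
      case 1 show ?case using \<open>c > 0\<close> r by simp
    next
      case (2 n VF EF R F1 F2 V E LC SC k \<eta>' U M A \<psi>)
      then have LKS: "skew_LKS_graph r \<epsilon> d V E LC SC k \<eta>'" using \<epsilon> r by (simp add: skew_LKS_graph_def)
      have small: "c * r / (real Nmax + 1) * n \<le> c * card X" if "X \<in> LC \<union> SC" for X
        using mult_left_mono[OF skew_LKS_graph.card_V_div_le_cluster[OF LKS _ that, of Nmax]] 2 \<open>c > 0\<close>
        by (simp add: algebra_simps)
      interpret tree_embedding_setting r \<epsilon> d V E LC SC k \<eta>' M VF EF R F1 F2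
          "c * r / (real Nmax + 1) * real n" \<eta> U A \<psi>
        by unfold_locales (use 2 \<epsilon> \<eta> r small in \<open>auto simp: skew_LKS_graph.q_def[OF LKS] c_def\<close>)
      show ?case by (rule tree_embedding)
    qed
  qed
qed

end
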